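(* Suppose Assumption (A1) holds and there exists $\epsilon>0$ such that $$1-L_{k-1}-L_k-2\gamma_kL_k\mu-\gamma_k^2\mu^2-\frac{\gamma_k\beta}{2}\ge\epsilon\quad\text{for all integers }k\ge1.$$ Then, for any $x_0,u_0\in\mathcal H$, the sequence $\{x_k\}_{k\in\mathbb N}$ generated by Algorithm NFBHF-M converges weakly to a point in $\operatorname{zer}(A+B+C)$.
   Context: $\mathcal H$ is a real Hilbert space. $\mathcal P(\mathcal H)$ denotes the set of bounded linear operators $S:\mathcal H\to\mathcal H$ that are self-adjoint and strongly positive ($\langle Sx,x\rangle\ge m\|x\|^2$ for some $m>0$ and all $x$); for such $S$, $S^{-1}\in\mathcal P(\mathcal H)$, $\langle x,y\rangle_S:=\langle Sx,y\rangle$ and $\|x\|_S:=\sqrt{\langle Sx,x\rangle}$. For $S\in\mathcal P(\mathcal H)$, a single-valued $T:\mathcal H\to\mathcal H$ is $L$-Lipschitz continuous w.r.t. $S$ if $\|Tx-Ty\|_{S^{-1}}\le L\|x-y\|_S$ for all $x,y$, and is $\beta^{-1}$-cocoercive w.r.t. $S$ ($\beta>0$) if $\langle Tx-Ty,x-y\rangle\ge \beta^{-1}\|Tx-Ty\|_{S^{-1}}^2$ for all $x,y$. $\operatorname{zer}(A+B+C)=\{x\in\mathcal H: 0\in Ax+Bx+Cx\}$. Assumption (A1): fix $S\in\mathcal P(\mathcal H)$. (i) $A:\mathcal H\to2^{\mathcal H}$ is maximally monotone; (ii) $B:\mathcal H\to\mathcal H$ is single-valued, monotone and $\mu$-Lipschitz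 continuous w.r.t. $S$ ($\mu\ge0$); (iii) $C:\mathcal H\to\mathcal H$ is $\beta^{-1}$-cocoercive w.r.t. $S$ for some $\beta>0$; (iv) $\operatorname{zer}(A+B+C)\neq\emptyset$; (v) there is $\gamma>0$ and, for each $k\in\mathbb N$, a step-size $\gamma_k\ge\gamma$, a constant $L_k\in[0,1)$ and a (possibly nonlinear) operator $M_k:\mathcal H\to\mathcal H$ such that $\gamma_kM_k-S$ is $L_k$-Lipschitz continuous w.r.t. $S$. (Under (v), $M_k$ is maximally monotone and strongly monotone, so $(M_k+A)^{-1}$ is single-valued with full domain.) Algorithm NFBHF-M: given $x_0,u_0\in\mathcal H$, for $k=0,1,2,\dots$ $$y_k=(M_k+A)^{-1}\big(M_kx_k-(B+C)x_k+\gamma_k^{-1}u_k\big),\quad x_{k+1}=y_k-\gamma_kS^{-1}By_k+\gamma_kS^{-1}Bx_k,\quad u_{k+1}=(\gamma_kM_k-S)y_k-(\gamma_kM_k-S)x_k.$$ *)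

theory Defs
  imports "HOL-Analysis.Analysis"
begin

text \<open>Real Hilbert space: type class real_inner + complete_space.\<close>

definition strongly_pos_sa :: "('a::real_inner \<Rightarrow> 'a) \<Rightarrow> bool" where
  "strongly_pos_sa S \<longleftrightarrow> bounded_linear S \<and> (\<forall>x y. inner (S x) y = inner x (S y))
     \<and> (\<exists>m>0. \<forall>x. inner (S x) x \<ge> m * (norm x)\<^sup>2)"

definition normS :: "('a::real_inner \<Rightarrow> 'a) \<Rightarrow> 'a \<Rightarrow> real" where
  "normS S x = sqrt (inner (S x) x)"

definition lipschitz_wrt :: "('a::real_inner \<Rightarrow> 'a) \<Rightarrow> real \<Rightarrow> ('a \<Rightarrow> 'a) \<Rightarrow> bool" where
  "lipschitz_wrt S L T \<longleftrightarrow> (\<forall>x y. normS (inv S) (T x - T y) \<le> L * normS S (x - y))"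

definition cocoercive_wrt :: "('a::real_inner \<Rightarrow> 'a) \<Rightarrow> real \<Rightarrow> ('a \<Rightarrow> 'a) \<Rightarrow> bool" where
  "cocoercive_wrt S \<beta> T \<longleftrightarrow>
     (\<forall>x y. inner (T x - T y) (x - y) \<ge> (1 / \<beta>) * (normS (inv S) (T x - T y))\<^sup>2)"

definition monotone_op :: "('a::real_inner \<Rightarrow> 'a set) \<Rightarrow> bool" where
  "monotone_op A \<longleftrightarrow> (\<forall>x y u v. u \<in> A x \<longrightarrow> v \<in> A y \<longrightarrow> inner (u - v) (x - y) \<ge> 0)"

definition maximal_monotone :: "('a::real_inner \<Rightarrow> 'a set) \<Rightarrow> bool" where
  "maximal_monotone A \<longleftrightarrow> monotone_op A \<and>
     (\<forall>A'. monotone_op A' \<longrightarrow> (\<forall>x. A x \<subseteq> A' x) \<longrightarrow> A' = A)"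

definition monotone_fun :: "('a::real_inner \<Rightarrow> 'a) \<Rightarrow> bool" where
  "monotone_fun B \<longleftrightarrow> (\<forall>x y. inner (B x - B y) (x - y) \<ge> 0)"

definition zer3 :: "('a::real_vector \<Rightarrow> 'a set) \<Rightarrow> ('a \<Rightarrow> 'a) \<Rightarrow> ('a \<Rightarrow> 'a) \<Rightarrow> 'a set" where
  "zer3 A B C = {x. 0 \<in> (\<lambda>a. a + B x + C x) ` A x}"

definition weakly_converges :: "(nat \<Rightarrow> 'a::real_inner) \<Rightarrow> 'a \<Rightarrow> bool" where
  "weakly_converges x z \<longleftrightarrow> (\<forall>y. (\<lambda>k. inner (x k) y) \<longlonglongrightarrow> inner z y)"

end

(*
  Fix a zero z of A + B + C.  Monotonicity of A and B, cocoercivity of C and the Lipschitz bounds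
  on B and gam_k M_k - S show that the Lyapunov value
    V_k(z) = ||x_{k+1} - z||_S^2 + 2 <u_{k+1}, x_{k+1} - z> + L_k ||x_k - y_k||_S^2
  is nonnegative and drops by at least eps ||x_{k+1} - y_{k+1}||_S^2 in every step.  Hence
  ||x_k - y_k||_S is square summable, u_k tends to 0, and ||x_k - z||_S converges for every zero z.
  The resolvent step yields a_k in A y_k with a_k + (B + C) y_k -> 0 strongly; since the graph of the
  maximally monotone operator A + B + C is closed under weak-strong limits, every weak cluster point
  of (x_k) is a zero.  Opial's lemma then gives weak convergence of the whole sequence.
*)

theory Submission
  imports Defs "HOL-Library.Diagonal_Subsequence"
begin

section \<open>Minimisation, Riesz representation and weak compactness in Hilbert spaces\<close>

lemma norm_add_scaleR_sq:
  fixes p v :: "'a::real_inner"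
  shows "(norm (p + t *\<^sub>R v))\<^sup>2 = (norm p)\<^sup>2 + 2 * t * inner p v + t\<^sup>2 * (norm v)\<^sup>2"
  unfolding power2_norm_eq_inner
  by (simp add: inner_simps inner_commute[of v p] power2_eq_square algebra_simps)

lemma norm_midpoint_sq:
  fixes p q :: "'a::real_inner"
  shows "(norm ((1/2) *\<^sub>R (p + q)))\<^sup>2 = (norm p)\<^sup>2 / 2 + (norm q)\<^sup>2 / 2 - (norm (p - q))\<^sup>2 / 4"
  by (simp add: power2_norm_eq_inner inner_simps inner_commute[of q p] field_simps)

lemma nonneg_if_small_perturbations_nonneg:
  fixes \<alpha> \<beta> :: real
  assumes "\<And>t. 0 < t \<Longrightarrow> t < 1 \<Longrightarrow> 0 \<le> \<alpha> + t * \<beta>"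
  shows "0 \<le> \<alpha>"
proof (rule tendsto_lowerbound)
  show "((\<lambda>t. \<alpha> + t * \<beta>) \<longlongrightarrow> \<alpha>) (at_right 0)"
    by (auto intro!: tendsto_eq_intros)
  have "\<forall>\<^sub>F t in at_right 0. t \<in> {0<..<(1::real)}"
    by (rule eventually_at_right_real) simp
  then show "\<forall>\<^sub>F t in at_right 0. 0 \<le> \<alpha> + t * \<beta>"
    by eventually_elim (use assms in auto)
qed simp

lemma Cauchy_if_sq_dist_le:
  fixes s :: "nat \<Rightarrow> 'a::real_normed_vector"
  assumes "\<delta> \<longlonglongrightarrow> 0" and "\<And>N n k. N \<le> n \<Longrightarrow> N \<le> k \<Longrightarrow> (norm (s n - s k))\<^sup>2 \<le> \<delta> N"
  shows "Cauchy s"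
proof (rule metric_CauchyI)
  fix e :: real assume "e > 0"
  then have "\<forall>\<^sub>F N in sequentially. \<delta> N < e\<^sup>2"
    using \<open>\<delta> \<longlonglongrightarrow> 0\<close> by (intro order_tendstoD(2)) auto
  then obtain N where "\<delta> N < e\<^sup>2"
    unfolding eventually_sequentially by blast
  have "norm (s n - s k) < e" if "N \<le> n" "N \<le> k" for n k
  proof -
    have "(norm (s n - s k))\<^sup>2 < e\<^sup>2"
      using assms(2)[OF that] \<open>\<delta> N < e\<^sup>2\<close> by linarith
    then show ?thesis
      using \<open>e > 0\<close> by (simp add: power_less_imp_less_base)
  qed
  then show "\<exists>M. \<forall>n\<ge>M. \<forall>k\<ge>M. dist (s n) (s k) < e"
    by (auto simp: dist_norm)
qed

lemma midpoint_strongly_convex_attains_min: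
  fixes f :: "'a::{real_inner,complete_space} \<Rightarrow> real"
  assumes "D \<noteq> {}" and nonneg: "\<And>p. p \<in> D \<Longrightarrow> 0 \<le> f p" and "c > 0"
    and midpoint: "\<And>p q. p \<in> D \<Longrightarrow> q \<in> D \<Longrightarrow> (1/2) *\<^sub>R (p + q) \<in> D \<and>
        f ((1/2) *\<^sub>R (p + q)) \<le> (f p + f q) / 2 - c * (norm (p - q))\<^sup>2"
    and lsc: "\<And>s l m. (\<And>n. s n \<in> D) \<Longrightarrow> s \<longlonglongrightarrow> l \<Longrightarrow> (\<lambda>n. f (s n)) \<longlonglongrightarrow> m
        \<Longrightarrow> l \<in> D \<and> f l \<le> m"
  shows "\<exists>p\<in>D. \<forall>q\<in>D. f p \<le> f q"
proof -
  define m where "m = Inf (f ` D)"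
  define \<delta> :: "nat \<Rightarrow> real" where "\<delta> n = 1 / Suc n" for n
  have "\<delta> \<longlonglongrightarrow> 0"
    unfolding \<delta>_def using LIMSEQ_inverse_real_of_nat by (simp add: inverse_eq_divide)
  have bdd: "bdd_below (f ` D)"
    by (rule bdd_belowI2[where m = 0]) (rule nonneg)
  have m_le: "m \<le> f q" if "q \<in> D" for q
    unfolding m_def using bdd that by (auto intro: cInf_lower)
  have "\<exists>p\<in>D. f p < m + \<delta> n" for n
    using cInf_less_iff[of "f ` D" "m + \<delta> n"] \<open>D \<noteq> {}\<close> bdd unfolding m_def \<delta>_def by auto
  then obtain s where s_in: "\<And>n. s n \<in> D" and s_lt: "\<And>n. f (s n) < m + \<delta> n"
    by metis
  have "(norm (s n - s k))\<^sup>2 \<le> \<delta> N / c" if "N \<le> n" "N \<le> k" for N n k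
  proof -
    have "m \<le> f ((1/2) *\<^sub>R (s n + s k))"
      using midpoint[OF s_in s_in] m_le by blast
    also have "\<dots> \<le> (f (s n) + f (s k)) / 2 - c * (norm (s n - s k))\<^sup>2"
      using midpoint[OF s_in s_in] by blast
    finally have "c * (norm (s n - s k))\<^sup>2 \<le> (\<delta> n + \<delta> k) / 2"
      using s_lt[of n] s_lt[of k] by argo
    moreover have "\<delta> n \<le> \<delta> N" "\<delta> k \<le> \<delta> N"
      using that unfolding \<delta>_def by (simp_all add: frac_le)
    ultimately show ?thesis
      using \<open>c > 0\<close> by (simp add: field_simps)
  qed
  moreover have "(\<lambda>N. \<delta> N / c) \<longlonglongrightarrow> 0"
    using tendsto_divide_zero[OF \<open>\<delta> \<longlonglongrightarrow> 0\<close>] .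
  ultimately obtain l where "s \<longlonglongrightarrow> l"
    using Cauchy_if_sq_dist_le Cauchy_convergent_iff convergent_def by metis
  moreover have "(\<lambda>n. f (s n)) \<longlonglongrightarrow> m"
  proof (rule real_tendsto_sandwich)
    show "\<forall>\<^sub>F n in sequentially. m \<le> f (s n)"
      using m_le s_in by simp
    show "\<forall>\<^sub>F n in sequentially. f (s n) \<le> m + \<delta> n"
      using s_lt by (simp add: less_imp_le)
    show "(\<lambda>n. m + \<delta> n) \<longlonglongrightarrow> m"
      using tendsto_add[OF tendsto_const \<open>\<delta> \<longlonglongrightarrow> 0\<close>, of m] by simp
  qed simp
  ultimately show ?thesis
    using lsc[OF s_in] m_le by force
qed

lemma orthogonal_projection_exists:
  fixes V :: "'a::{real_inner,complete_space} set"
  assumes "closed V" and "subspace V"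
  shows "\<exists>p\<in>V. \<forall>v\<in>V. inner (y - p) v = 0"
proof -
  have "\<exists>p\<in>V. \<forall>q\<in>V. (norm (y - p))\<^sup>2 \<le> (norm (y - q))\<^sup>2"
  proof (rule midpoint_strongly_convex_attains_min[where c = "1/4"])
    show "V \<noteq> {}"
      using subspace_0[OF \<open>subspace V\<close>] by auto
  next
    fix p q assume "p \<in> V" "q \<in> V"
    then have "(1/2) *\<^sub>R (p + q) \<in> V"
      using \<open>subspace V\<close> by (simp add: subspace_add subspace_scale)
    moreover have "y - (1/2) *\<^sub>R (p + q) = (1/2) *\<^sub>R ((y - p) + (y - q))"
      by (simp add: algebra_simps flip: scaleR_2)
    ultimately show "(1/2) *\<^sub>R (p + q) \<in> V \<and> (norm (y - (1/2) *\<^sub>R (p + q)))\<^sup>2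
        \<le> ((norm (y - p))\<^sup>2 + (norm (y - q))\<^sup>2) / 2 - 1/4 * (norm (p - q))\<^sup>2"
      using norm_midpoint_sq[of "y - p" "y - q"] by (simp add: norm_minus_commute)
  next
    fix s l m assume s: "\<And>n::nat. s n \<in> V" "s \<longlonglongrightarrow> l" "(\<lambda>n. (norm (y - s n))\<^sup>2) \<longlonglongrightarrow> m"
    have "(\<lambda>n. (norm (y - s n))\<^sup>2) \<longlonglongrightarrow> (norm (y - l))\<^sup>2"
      by (intro tendsto_intros s(2))
    then show "l \<in> V \<and> (norm (y - l))\<^sup>2 \<le> m"
      using s \<open>closed V\<close> closed_sequentially LIMSEQ_unique by (metis order_refl)
  qed auto
  then obtain p where "p \<in> V" and p_min: "\<And>q. q \<in> V \<Longrightarrow> (norm (y - p))\<^sup>2 \<le> (norm (y - q))\<^sup>2"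
    by blast
  have variational: "0 \<le> - 2 * inner (y - p) v" if "v \<in> V" for v
  proof (rule nonneg_if_small_perturbations_nonneg)
    fix t :: real assume "0 < t" "t < 1"
    have "p + t *\<^sub>R v \<in> V"
      using \<open>p \<in> V\<close> that \<open>subspace V\<close> by (simp add: subspace_add subspace_scale)
    from p_min[OF this] have "(norm (y - p))\<^sup>2 \<le> (norm ((y - p) + (- t) *\<^sub>R v))\<^sup>2"
      by (simp add: algebra_simps)
    then have "0 \<le> t * (- 2 * inner (y - p) v + t * (norm v)\<^sup>2)"
      unfolding norm_add_scaleR_sq by (simp add: algebra_simps power2_eq_square)
    then show "0 \<le> - 2 * inner (y - p) v + t * (norm v)\<^sup>2"
      using \<open>0 < t\<close> by (simp add: zero_le_mult_iff)
  qed
  show ?thesis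
  proof (intro bexI ballI)
    fix v assume "v \<in> V"
    then have "- v \<in> V"
      using \<open>subspace V\<close> by (metis scaleR_minus1_left subspace_scale)
    then show "inner (y - p) v = 0"
      using variational[OF \<open>v \<in> V\<close>] variational[of "- v"] by simp
  qed fact
qed

lemma riesz_representation:
  fixes g :: "'a::{real_inner,complete_space} \<Rightarrow> real"
  assumes "bounded_linear g"
  shows "\<exists>w. \<forall>y. g y = inner w y"
proof (cases "\<forall>y. g y = 0")
  case True
  then show ?thesis by (intro exI[of _ 0]) simp
next
  case False
  then obtain y0 where "g y0 \<noteq> 0" by blast
  interpret g: bounded_linear g by fact
  define N where "N = {y. g y = 0}"
  have "closed N"
    unfolding N_def by (intro closed_Collect_eq continuous_intros g.continuous_on)
  moreover have "subspace N"
    unfolding N_def subspace_def by (simp add: g.add g.scaleR)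
  ultimately obtain p where "p \<in> N" and p_orth: "\<And>v. v \<in> N \<Longrightarrow> inner (y0 - p) v = 0"
    using orthogonal_projection_exists by blast
  define e where "e = y0 - p"
  have "g e = g y0"
    using \<open>p \<in> N\<close> unfolding e_def N_def by (simp add: g.diff)
  then have "e \<noteq> 0"
    using \<open>g y0 \<noteq> 0\<close> by auto
  have "g y = inner ((g e / inner e e) *\<^sub>R e) y" for y
  proof -
    have "y - (g y / g e) *\<^sub>R e \<in> N"
      unfolding N_def using \<open>g e = g y0\<close> \<open>g y0 \<noteq> 0\<close> by (simp add: g.diff g.scaleR)
    then have "inner e (y - (g y / g e) *\<^sub>R e) = 0"
      using p_orth unfolding e_def by blast
    then have "inner e y = (g y / g e) * inner e e"
      by (simp add: inner_diff_right)
    then show ?thesis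
      using \<open>e \<noteq> 0\<close> \<open>g e = g y0\<close> \<open>g y0 \<noteq> 0\<close> by (simp add: field_simps)
  qed
  then show ?thesis by blast
qed

lemma closed_inner_convergent:
  fixes x :: "nat \<Rightarrow> 'a::real_inner"
  assumes "Bseq x"
  shows "closed {v. convergent (\<lambda>n. inner (x n) v)}"
  unfolding closed_sequential_limits
proof (intro allI impI, elim conjE)
  fix s l assume s_conv: "\<forall>j. s j \<in> {v. convergent (\<lambda>n. inner (x n) v)}" and "s \<longlonglongrightarrow> l"
  obtain R where "R > 0" and bnd: "\<And>n. norm (x n) \<le> R"
    using \<open>Bseq x\<close> by (metis BseqE)
  then have "R \<ge> 0"
    by simp
  have "Cauchy (\<lambda>n. inner (x n) l)"
  proof (rule metric_CauchyI)
    fix e :: real assume "e > 0"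
    define d where "d = e / (4 * (R + 1))"
    have "d > 0"
      unfolding d_def using \<open>e > 0\<close> \<open>R \<ge> 0\<close> by simp
    then obtain j where j: "norm (l - s j) < d"
      using \<open>s \<longlonglongrightarrow> l\<close> unfolding LIMSEQ_iff by (metis norm_minus_commute order_refl)
    have "Cauchy (\<lambda>n. inner (x n) (s j))"
      using s_conv by (simp add: convergent_Cauchy)
    then obtain M where M: "\<And>m n. M \<le> m \<Longrightarrow> M \<le> n \<Longrightarrow>
        \<bar>inner (x m) (s j) - inner (x n) (s j)\<bar> < e / 2"
      using \<open>e > 0\<close> unfolding Cauchy_def dist_real_def by (metis half_gt_zero)
    have "\<bar>inner (x m) l - inner (x n) l\<bar> < e" if "M \<le> m" "M \<le> n" for m n
    proof -
      have "\<bar>inner (x m - x n) (l - s j)\<bar> \<le> norm (x m - x n) * norm (l - s j)"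
        by (rule Cauchy_Schwarz_ineq2)
      also have "\<dots> \<le> (2 * R) * d"
        using bnd[of m] bnd[of n] norm_triangle_ineq4[of "x m" "x n"] j \<open>R \<ge> 0\<close>
        by (intro mult_mono) auto
      also have "\<dots> < e / 2"
        unfolding d_def using \<open>e > 0\<close> \<open>R \<ge> 0\<close> by (simp add: field_simps)
      finally have "\<bar>inner (x m - x n) (l - s j)\<bar> < e / 2" .
      moreover have "inner (x m) l - inner (x n) l
          = inner (x m - x n) (l - s j) + (inner (x m) (s j) - inner (x n) (s j))"
        by (simp add: inner_diff_left inner_diff_right)
      ultimately show ?thesis
        using M[OF that] by linarith
    qed
    then show "\<exists>M. \<forall>m\<ge>M. \<forall>n\<ge>M. dist (inner (x m) l) (inner (x n) l) < e"
      by (auto simp: dist_real_def)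
  qed
  then show "l \<in> {v. convergent (\<lambda>n. inner (x n) v)}"
    by (simp add: Cauchy_convergent_iff)
qed

lemma diagonal_subseq_inner_convergent:
  fixes x :: "nat \<Rightarrow> 'a::real_inner"
  assumes "Bseq x"
  shows "\<exists>\<sigma>. strict_mono \<sigma> \<and> (\<forall>m. convergent (\<lambda>n. inner (x (\<sigma> n)) (x m)))"
proof -
  obtain R where R: "\<And>n. norm (x n) \<le> R"
    using \<open>Bseq x\<close> by (metis BseqE)
  have bnd: "norm (inner (x n) (x m)) \<le> R * R" for n m
  proof -
    have "norm (inner (x n) (x m)) \<le> norm (x n) * norm (x m)"
      using Cauchy_Schwarz_ineq2 by simp
    also have "\<dots> \<le> R * R"
      using R by (intro mult_mono) (auto intro: order_trans[OF norm_ge_zero])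
    finally show ?thesis .
  qed
  interpret subseqs "\<lambda>m s. convergent (\<lambda>n. inner (x (s n)) (x m))"
  proof
    fix m and s :: "nat \<Rightarrow> nat"
    have "bounded (range (\<lambda>n. inner (x (s n)) (x m)))"
      using bnd by (auto intro!: boundedI)
    then obtain l r where "strict_mono r" "((\<lambda>n. inner (x (s n)) (x m)) \<circ> r) \<longlonglongrightarrow> l"
      using bounded_imp_convergent_subsequence by blast
    then show "\<exists>r. strict_mono r \<and> convergent (\<lambda>n. inner (x ((s \<circ> r) n)) (x m))"
      by (auto simp: convergent_def o_def)
  qed
  have "convergent (\<lambda>n. inner (x (diagseq n)) (x m))" for m
  proof -
    have "convergent (\<lambda>n. inner (x ((diagseq \<circ> (+) (Suc m)) n)) (x m))"
    proof (rule diagseq_holds)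
      fix r s n assume "strict_mono (r :: nat \<Rightarrow> nat)" "convergent (\<lambda>k. inner (x (s k)) (x n))"
      then show "convergent (\<lambda>k. inner (x ((s \<circ> r) k)) (x n))"
        using convergent_subseq_convergent[of "\<lambda>k. inner (x (s k)) (x n)" r] by (simp add: o_def)
    qed
    then show ?thesis
      using convergent_ignore_initial_segment[of "\<lambda>n. inner (x (diagseq n)) (x m)" "Suc m"]
      by (simp add: o_def add.commute)
  qed
  then show ?thesis
    using subseq_diagseq by blast
qed

lemma inner_convergent_if_convergent_on_seq:
  fixes x :: "nat \<Rightarrow> 'a::{real_inner,complete_space}"
  assumes "Bseq x" and conv_x: "\<And>m. convergent (\<lambda>n. inner (x n) (x m))"
  shows "convergent (\<lambda>n. inner (x n) y)"
proof -
  define W where "W = {v. convergent (\<lambda>n. inner (x n) v)}"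
  have "closed W"
    unfolding W_def using \<open>Bseq x\<close> by (rule closed_inner_convergent)
  moreover have "subspace W"
    unfolding W_def subspace_def
    by (auto simp: inner_add_right convergent_add convergent_const intro: convergent_mult)
  ultimately obtain p where "p \<in> W" and p_orth: "\<And>v. v \<in> W \<Longrightarrow> inner (y - p) v = 0"
    using orthogonal_projection_exists by blast
  have "inner (x n) y = inner (x n) p" for n
  proof -
    have "x n \<in> W"
      unfolding W_def using conv_x by simp
    then have "inner (y - p) (x n) = 0"
      by (rule p_orth)
    then have "inner (x n) y - inner (x n) p = 0"
      by (simp add: inner_commute inner_diff_right)
    then show ?thesis
      by simp
  qed
  then show ?thesis
    using \<open>p \<in> W\<close> unfolding W_def by simp
qed

lemma weakly_convergent_if_inner_convergent:
  fixes x :: "nat \<Rightarrow> 'a::{real_inner,complete_space}"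
  assumes "Bseq x" and "\<And>y. convergent (\<lambda>n. inner (x n) y)"
  shows "\<exists>w. weakly_converges x w"
proof -
  obtain R where bnd: "\<And>n. norm (x n) \<le> R"
    using \<open>Bseq x\<close> by (metis BseqE)
  define g where "g y = lim (\<lambda>n. inner (x n) y)" for y
  have g_lim: "(\<lambda>n. inner (x n) y) \<longlonglongrightarrow> g y" for y
    using assms(2) unfolding g_def by (simp add: convergent_LIMSEQ_iff)
  have "bounded_linear g"
  proof (rule bounded_linear_intro[where K = R])
    fix y1 y2 :: 'a
    have "(\<lambda>n. inner (x n) (y1 + y2)) \<longlonglongrightarrow> g y1 + g y2"
      unfolding inner_add_right by (intro tendsto_add g_lim)
    then show "g (y1 + y2) = g y1 + g y2"
      by (rule LIMSEQ_unique[OF g_lim])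
  next
    fix a and y :: 'a
    have "(\<lambda>n. inner (x n) (a *\<^sub>R y)) \<longlonglongrightarrow> a *\<^sub>R g y"
      unfolding inner_scaleR_right real_scaleR_def by (intro tendsto_mult tendsto_const g_lim)
    then show "g (a *\<^sub>R y) = a *\<^sub>R g y"
      by (rule LIMSEQ_unique[OF g_lim])
  next
    fix y :: 'a
    have "norm (inner (x n) y) \<le> norm y * R" for n
    proof -
      have "norm (inner (x n) y) \<le> norm (x n) * norm y"
        using Cauchy_Schwarz_ineq2 by simp
      also have "\<dots> \<le> R * norm y"
        using bnd[of n] by (rule mult_right_mono) simp
      finally show ?thesis
        by (simp add: mult.commute)
    qed
    moreover have "(\<lambda>n. norm (inner (x n) y)) \<longlonglongrightarrow> norm (g y)"
      by (intro tendsto_norm g_lim)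
    ultimately show "norm (g y) \<le> norm y * R"
      by (auto intro: LIMSEQ_le_const2)
  qed
  then obtain w where "\<And>y. g y = inner w y"
    using riesz_representation by blast
  then show ?thesis
    unfolding weakly_converges_def using g_lim by metis
qed

lemma weakly_convergent_subseq:
  fixes x :: "nat \<Rightarrow> 'a::{real_inner,complete_space}"
  assumes "Bseq x"
  shows "\<exists>\<sigma> w. strict_mono \<sigma> \<and> weakly_converges (x \<circ> \<sigma>) w"
proof -
  obtain \<sigma> where "strict_mono \<sigma>" and conv: "\<And>m. convergent (\<lambda>n. inner (x (\<sigma> n)) (x m))"
    using diagonal_subseq_inner_convergent[OF assms] by blast
  have "Bseq (x \<circ> \<sigma>)"
    using Bseq_subseq[OF assms] by (simp add: o_def)
  moreover have "convergent (\<lambda>n. inner ((x \<circ> \<sigma>) n) ((x \<circ> \<sigma>) m))" for m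
    using conv by simp
  ultimately have "convergent (\<lambda>n. inner ((x \<circ> \<sigma>) n) y)" for y
    by (rule inner_convergent_if_convergent_on_seq)
  then show ?thesis
    using weakly_convergent_if_inner_convergent[OF \<open>Bseq (x \<circ> \<sigma>)\<close>] \<open>strict_mono \<sigma>\<close> by blast
qed

lemma LIMSEQ_if_subseqs_have_LIMSEQ_subseq:
  fixes f :: "nat \<Rightarrow> 'a::metric_space"
  assumes "\<And>\<tau> :: nat \<Rightarrow> nat. strict_mono \<tau> \<Longrightarrow>
    \<exists>\<rho> :: nat \<Rightarrow> nat. strict_mono \<rho> \<and> (f \<circ> \<tau> \<circ> \<rho>) \<longlonglongrightarrow> l"
  shows "f \<longlonglongrightarrow> l"
proof (rule ccontr)
  assume "\<not> f \<longlonglongrightarrow> l"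
  then obtain e where "e > 0" and "\<forall>N. \<exists>n\<ge>N. \<not> dist (f n) l < e"
    unfolding lim_sequentially by blast
  then have "infinite {n. e \<le> dist (f n) l}"
    unfolding infinite_nat_iff_unbounded_le by (auto simp: not_less)
  then obtain \<tau> :: "nat \<Rightarrow> nat" where "strict_mono \<tau>" and far: "\<And>n. e \<le> dist (f (\<tau> n)) l"
    using infinite_enumerate by blast
  obtain \<rho> where "(f \<circ> \<tau> \<circ> \<rho>) \<longlonglongrightarrow> l"
    using assms[OF \<open>strict_mono \<tau>\<close>] by blast
  then obtain n where "dist (f (\<tau> (\<rho> n))) l < e"
    using \<open>e > 0\<close> unfolding lim_sequentially by fastforce
  with far show False
    by (simp add: not_less[symmetric])
qed

section \<open>Maximal monotone operators\<close>

lemma maximal_monotoneD: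
  assumes "maximal_monotone A"
    and "\<And>a b. b \<in> A a \<Longrightarrow> 0 \<le> inner (u - b) (x - a)"
  shows "u \<in> A x"
proof -
  define A' where "A' = (\<lambda>z. if z = x then insert u (A z) else A z)"
  have "monotone_op A"
    using assms(1) unfolding maximal_monotone_def by simp
  have "monotone_op A'"
    unfolding monotone_op_def
  proof (intro allI impI)
    fix x1 x2 u1 u2 assume "u1 \<in> A' x1" "u2 \<in> A' x2"
    then consider "u1 \<in> A x1" "u2 \<in> A x2" | "x1 = x" "u1 = u" "u2 \<in> A x2"
      | "u1 \<in> A x1" "x2 = x" "u2 = u" | "x1 = x" "u1 = u" "x2 = x" "u2 = u"
      unfolding A'_def by (auto split: if_splits)
    then show "0 \<le> inner (u1 - u2) (x1 - x2)"
    proof cases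
      case 1
      then show ?thesis
        using \<open>monotone_op A\<close> unfolding monotone_op_def by blast
    next
      case 2
      then show ?thesis
        using assms(2) by blast
    next
      case 3
      then have "inner (u1 - u2) (x1 - x2) = inner (u - u1) (x - x1)"
        by (simp add: inner_diff_left inner_diff_right)
      then show ?thesis
        using assms(2)[OF \<open>u1 \<in> A x1\<close>] by simp
    qed simp
  qed
  moreover have "\<forall>z. A z \<subseteq> A' z"
    unfolding A'_def by auto
  ultimately have "A' = A"
    using assms(1) unfolding maximal_monotone_def by blast
  moreover have "u \<in> A' x"
    unfolding A'_def by simp
  ultimately show ?thesis
    by simp
qed

lemma maximal_monotoneI:
  assumes "monotone_op A"
    and "\<And>x u. (\<And>a b. b \<in> A a \<Longrightarrow> 0 \<le> inner (u - b) (x - a)) \<Longrightarrow> u \<in> A x"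
  shows "maximal_monotone A"
  unfolding maximal_monotone_def
proof (intro conjI allI impI ext)
  fix A' x assume "monotone_op A'" and "\<forall>x. A x \<subseteq> A' x"
  show "A' x = A x"
  proof
    show "A' x \<subseteq> A x"
    proof
      fix u assume "u \<in> A' x"
      show "u \<in> A x"
      proof (rule assms(2))
        fix a b assume "b \<in> A a"
        then show "0 \<le> inner (u - b) (x - a)"
          using \<open>monotone_op A'\<close> \<open>u \<in> A' x\<close> \<open>\<forall>x. A x \<subseteq> A' x\<close>
          unfolding monotone_op_def by blast
      qed
    qed
  qed (use \<open>\<forall>x. A x \<subseteq> A' x\<close> in blast)
qed fact

definition graph_op :: "('a \<Rightarrow> 'a set) \<Rightarrow> ('a \<times> 'a) set" where
  "graph_op A = {(a, b). b \<in> A a}"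

definition fitzpatrick_term :: "'a::real_inner \<times> 'a \<Rightarrow> 'a \<times> 'a \<Rightarrow> real" where
  "fitzpatrick_term g p = inner (fst p) (snd g) + inner (fst g) (snd p) - inner (fst g) (snd g)"

text \<open>The Fitzpatrick function of \<open>A\<close> is a supremum of affine functions; it is real-valued only
  on \<open>fitzpatrick_dom A\<close>, where that supremum is finite.  Minty's theorem follows by minimising it
  plus half the squared norm: a minimiser \<open>(x0, u0)\<close> has \<open>- x0 \<in> A (- u0)\<close> and \<open>x0 + u0 = 0\<close>.\<close>

definition fitzpatrick_dom :: "('a::real_inner \<Rightarrow> 'a set) \<Rightarrow> ('a \<times> 'a) set" where
  "fitzpatrick_dom A = {p. bdd_above ((\<lambda>g. fitzpatrick_term g p) ` graph_op A)}"

definition fitzpatrick :: "('a::real_inner \<Rightarrow> 'a set) \<Rightarrow> 'a \<times> 'a \<Rightarrow> real" where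
  "fitzpatrick A p = (SUP g\<in>graph_op A. fitzpatrick_term g p)"

lemma fitzpatrick_term_le:
  assumes "g \<in> graph_op A" and "p \<in> fitzpatrick_dom A"
  shows "fitzpatrick_term g p \<le> fitzpatrick A p"
  using assms unfolding fitzpatrick_def fitzpatrick_dom_def by (auto intro: cSUP_upper)

lemma fitzpatrick_le:
  assumes "graph_op A \<noteq> {}" and "\<And>g. g \<in> graph_op A \<Longrightarrow> fitzpatrick_term g p \<le> c"
  shows "p \<in> fitzpatrick_dom A \<and> fitzpatrick A p \<le> c"
proof
  show "p \<in> fitzpatrick_dom A"
    unfolding fitzpatrick_dom_def mem_Collect_eq using assms(2) by (rule bdd_aboveI2)
  show "fitzpatrick A p \<le> c"
    unfolding fitzpatrick_def using assms by (intro cSUP_least)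
qed

lemma graph_op_nonempty:
  assumes "maximal_monotone A"
  shows "graph_op A \<noteq> {}"
proof
  assume "graph_op A = {}"
  then have "0 \<in> A 0"
    by (intro maximal_monotoneD[OF assms]) (auto simp: graph_op_def)
  with \<open>graph_op A = {}\<close> show False
    unfolding graph_op_def by auto
qed

lemma fitzpatrick_on_graph:
  assumes "monotone_op A" and "g \<in> graph_op A"
  shows "g \<in> fitzpatrick_dom A \<and> fitzpatrick A g = inner (fst g) (snd g)"
proof -
  have "fitzpatrick_term h g \<le> inner (fst g) (snd g)" if "h \<in> graph_op A" for h
    using \<open>monotone_op A\<close> \<open>g \<in> graph_op A\<close> that
    unfolding monotone_op_def graph_op_def fitzpatrick_term_def
    by (force simp: inner_diff_left inner_diff_right inner_commute)
  then have "g \<in> fitzpatrick_dom A \<and> fitzpatrick A g \<le> inner (fst g) (snd g)"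
    using assms(2) by (intro fitzpatrick_le) auto
  moreover have "fitzpatrick_term g g = inner (fst g) (snd g)"
    unfolding fitzpatrick_term_def by simp
  ultimately show ?thesis
    using fitzpatrick_term_le[OF assms(2)] by fastforce
qed

lemma fitzpatrick_ge_inner:
  assumes "maximal_monotone A" and "p \<in> fitzpatrick_dom A"
  shows "inner (fst p) (snd p) \<le> fitzpatrick A p"
proof (rule ccontr)
  assume less: "\<not> inner (fst p) (snd p) \<le> fitzpatrick A p"
  have "snd p \<in> A (fst p)"
  proof (rule maximal_monotoneD[OF assms(1)])
    fix a b assume "b \<in> A a"
    then have "fitzpatrick_term (a, b) p \<le> fitzpatrick A p"
      using assms(2) by (intro fitzpatrick_term_le) (auto simp: graph_op_def)
    then show "0 \<le> inner (snd p - b) (fst p - a)"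
      using less unfolding fitzpatrick_term_def
      by (simp add: inner_diff_left inner_diff_right inner_commute)
  qed
  then have "fitzpatrick A p = inner (fst p) (snd p)"
    using assms(1) fitzpatrick_on_graph unfolding maximal_monotone_def graph_op_def
    by (metis (mono_tags, lifting) case_prod_beta mem_Collect_eq)
  with less show False
    by simp
qed

lemma fitzpatrick_convex:
  assumes "graph_op A \<noteq> {}" and "p \<in> fitzpatrick_dom A" "q \<in> fitzpatrick_dom A"
    and "0 \<le> t" "t \<le> 1"
  shows "(1 - t) *\<^sub>R p + t *\<^sub>R q \<in> fitzpatrick_dom A \<and>
    fitzpatrick A ((1 - t) *\<^sub>R p + t *\<^sub>R q) \<le> (1 - t) * fitzpatrick A p + t * fitzpatrick A q"
proof (rule fitzpatrick_le[OF assms(1)])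
  fix g assume "g \<in> graph_op A"
  have "fitzpatrick_term g ((1 - t) *\<^sub>R p + t *\<^sub>R q)
      = (1 - t) * fitzpatrick_term g p + t * fitzpatrick_term g q"
    unfolding fitzpatrick_term_def by (simp add: inner_simps algebra_simps)
  also have "\<dots> \<le> (1 - t) * fitzpatrick A p + t * fitzpatrick A q"
    using fitzpatrick_term_le[OF \<open>g \<in> graph_op A\<close>] assms(2-5)
    by (intro add_mono mult_left_mono) auto
  finally show "fitzpatrick_term g ((1 - t) *\<^sub>R p + t *\<^sub>R q)
      \<le> (1 - t) * fitzpatrick A p + t * fitzpatrick A q" .
qed

lemma fitzpatrick_lsc:
  assumes "graph_op A \<noteq> {}" and "\<And>n. s n \<in> fitzpatrick_dom A" and "s \<longlonglongrightarrow> l"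
    and "(\<lambda>n. fitzpatrick A (s n)) \<longlonglongrightarrow> m"
  shows "l \<in> fitzpatrick_dom A \<and> fitzpatrick A l \<le> m"
proof (rule fitzpatrick_le[OF assms(1)])
  fix g assume "g \<in> graph_op A"
  show "fitzpatrick_term g l \<le> m"
  proof (rule LIMSEQ_le)
    show "(\<lambda>n. fitzpatrick_term g (s n)) \<longlonglongrightarrow> fitzpatrick_term g l"
      unfolding fitzpatrick_term_def by (intro tendsto_intros assms(3))
    show "\<exists>N. \<forall>n\<ge>N. fitzpatrick_term g (s n) \<le> fitzpatrick A (s n)"
      using fitzpatrick_term_le[OF \<open>g \<in> graph_op A\<close> assms(2)] by blast
  qed fact
qed

lemma fitzpatrick_regularized_attains_min:
  fixes A :: "'a::{real_inner,complete_space} \<Rightarrow> 'a set"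
  assumes "maximal_monotone A"
  shows "\<exists>p\<in>fitzpatrick_dom A. \<forall>q\<in>fitzpatrick_dom A.
           fitzpatrick A p + (norm p)\<^sup>2 / 2 \<le> fitzpatrick A q + (norm q)\<^sup>2 / 2"
    (is "\<exists>p\<in>_. \<forall>q\<in>_. ?f p \<le> ?f q")
proof -
  have mono: "monotone_op A" and graph_ne: "graph_op A \<noteq> {}"
    using assms graph_op_nonempty unfolding maximal_monotone_def by auto
  show ?thesis
  proof (rule midpoint_strongly_convex_attains_min[where c = "1/8"])
    show "fitzpatrick_dom A \<noteq> {}"
      using graph_ne fitzpatrick_on_graph[OF mono] by blast
  next
    fix p :: "'a \<times> 'a" assume "p \<in> fitzpatrick_dom A"
    have "0 \<le> (norm (fst p + snd p))\<^sup>2"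
      by simp
    also have "\<dots> = 2 * inner (fst p) (snd p) + (norm p)\<^sup>2"
      by (simp add: power2_norm_eq_inner inner_prod_def inner_simps inner_commute)
    finally show "0 \<le> ?f p"
      using fitzpatrick_ge_inner[OF assms \<open>p \<in> fitzpatrick_dom A\<close>] by argo
  next
    fix p q assume "p \<in> fitzpatrick_dom A" "q \<in> fitzpatrick_dom A"
    from fitzpatrick_convex[OF graph_ne this, of "1/2"]
    have "(1/2) *\<^sub>R (p + q) \<in> fitzpatrick_dom A \<and>
        fitzpatrick A ((1/2) *\<^sub>R (p + q)) \<le> (fitzpatrick A p + fitzpatrick A q) / 2"
      by (simp add: scaleR_add_right add_divide_distrib)
    then show "(1/2) *\<^sub>R (p + q) \<in> fitzpatrick_dom A \<and>
        ?f ((1/2) *\<^sub>R (p + q)) \<le> (?f p + ?f q) / 2 - 1/8 * (norm (p - q))\<^sup>2"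
      unfolding norm_midpoint_sq by argo
  next
    fix s l m assume s: "\<And>n::nat. s n \<in> fitzpatrick_dom A" "s \<longlonglongrightarrow> l"
      and "(\<lambda>n. ?f (s n)) \<longlonglongrightarrow> m"
    then have "(\<lambda>n. ?f (s n) - (norm (s n))\<^sup>2 / 2) \<longlonglongrightarrow> m - (norm l)\<^sup>2 / 2"
      by (intro tendsto_intros) auto
    then have "l \<in> fitzpatrick_dom A \<and> fitzpatrick A l \<le> m - (norm l)\<^sup>2 / 2"
      using fitzpatrick_lsc[OF graph_ne s] by simp
    then show "l \<in> fitzpatrick_dom A \<and> ?f l \<le> m"
      by simp
  qed simp
qed

lemma fitzpatrick_variational_inequality:
  fixes A :: "'a::{real_inner,complete_space} \<Rightarrow> 'a set"
  assumes "maximal_monotone A"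
  shows "\<exists>p\<in>fitzpatrick_dom A. \<forall>g\<in>graph_op A.
           0 \<le> fitzpatrick A g - fitzpatrick A p + inner p (g - p)"
proof -
  have mono: "monotone_op A" and graph_ne: "graph_op A \<noteq> {}"
    using assms graph_op_nonempty unfolding maximal_monotone_def by auto
  define f where "f p = fitzpatrick A p + (norm p)\<^sup>2 / 2" for p
  obtain p where p: "p \<in> fitzpatrick_dom A" and p_min: "\<And>q. q \<in> fitzpatrick_dom A \<Longrightarrow> f p \<le> f q"
    using fitzpatrick_regularized_attains_min[OF assms] unfolding f_def by blast
  have "0 \<le> fitzpatrick A g - fitzpatrick A p + inner p (g - p)" if "g \<in> graph_op A" for g
  proof (rule nonneg_if_small_perturbations_nonneg)
    fix t :: real assume "0 < t" "t < 1"
    have g: "g \<in> fitzpatrick_dom A"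
      using fitzpatrick_on_graph[OF mono that] by blast
    note conv = fitzpatrick_convex[OF graph_ne p g, of t]
    have "f p \<le> f ((1 - t) *\<^sub>R p + t *\<^sub>R g)"
      using conv \<open>0 < t\<close> \<open>t < 1\<close> p_min by simp
    also have "\<dots> \<le> (1 - t) * fitzpatrick A p + t * fitzpatrick A g
        + (norm (p + t *\<^sub>R (g - p)))\<^sup>2 / 2"
      using conv \<open>0 < t\<close> \<open>t < 1\<close> unfolding f_def by (simp add: algebra_simps)
    finally have "0 \<le> t * (fitzpatrick A g - fitzpatrick A p + inner p (g - p)
        + t * ((norm (g - p))\<^sup>2 / 2))"
      unfolding f_def norm_add_scaleR_sq by (simp add: field_simps power2_eq_square)
    then show "0 \<le> fitzpatrick A g - fitzpatrick A p + inner p (g - p) + t * ((norm (g - p))\<^sup>2 / 2)"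
      using \<open>0 < t\<close> by (simp add: zero_le_mult_iff)
  qed
  then show ?thesis
    using p by blast
qed

theorem maximal_monotone_minty:
  fixes A :: "'a::{real_inner,complete_space} \<Rightarrow> 'a set"
  assumes "maximal_monotone A"
  shows "\<exists>x. - x \<in> A x"
proof -
  obtain x0 u0 where p: "(x0, u0) \<in> fitzpatrick_dom A"
    and var: "\<And>g. g \<in> graph_op A \<Longrightarrow>
      0 \<le> fitzpatrick A g - fitzpatrick A (x0, u0) + inner (x0, u0) (g - (x0, u0))"
    using fitzpatrick_variational_inequality[OF assms] by auto
  have "monotone_op A"
    using assms unfolding maximal_monotone_def by simp
  have "inner x0 u0 \<le> fitzpatrick A (x0, u0)"
    using fitzpatrick_ge_inner[OF assms p] by simp
  have key: "(norm (x0 + u0))\<^sup>2 \<le> inner (a + u0) (b + x0)" if "b \<in> A a" for a b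
  proof -
    have "(a, b) \<in> graph_op A"
      using that by (simp add: graph_op_def)
    with var fitzpatrick_on_graph[OF \<open>monotone_op A\<close>]
    have "0 \<le> inner a b - fitzpatrick A (x0, u0) + inner x0 (a - x0) + inner u0 (b - u0)"
      by (fastforce simp: inner_prod_def)
    then show ?thesis
      using \<open>inner x0 u0 \<le> fitzpatrick A (x0, u0)\<close>
      by (simp add: power2_norm_eq_inner inner_simps inner_commute)
  qed
  have "- x0 \<in> A (- u0)"
  proof (rule maximal_monotoneD[OF assms])
    fix a b assume "b \<in> A a"
    have "inner (- x0 - b) (- u0 - a) = inner (a + u0) (b + x0)"
      by (simp add: inner_simps inner_commute)
    then show "0 \<le> inner (- x0 - b) (- u0 - a)"
      using key[OF \<open>b \<in> A a\<close>] zero_le_power2 order_trans by metis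
  qed
  moreover from key[OF this] have "(norm (x0 + u0))\<^sup>2 \<le> 0"
    by simp
  then have "u0 = - x0"
    by (simp add: add_eq_0_iff)
  ultimately show ?thesis
    by auto
qed

lemma maximal_monotone_shift_scale:
  assumes "maximal_monotone A" and "l > 0"
  shows "maximal_monotone (\<lambda>y. (\<lambda>b. l *\<^sub>R b) ` A (y + z))"
    (is "maximal_monotone ?A")
proof (rule maximal_monotoneI)
  have "monotone_op A"
    using assms(1) unfolding maximal_monotone_def by simp
  show "monotone_op ?A"
    unfolding monotone_op_def
  proof (intro allI impI)
    fix x1 x2 u1 u2 assume "u1 \<in> ?A x1" "u2 \<in> ?A x2"
    then obtain b1 b2 where b: "b1 \<in> A (x1 + z)" "b2 \<in> A (x2 + z)" "u1 = l *\<^sub>R b1" "u2 = l *\<^sub>R b2"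
      by auto
    have "0 \<le> inner (b1 - b2) ((x1 + z) - (x2 + z))"
      using \<open>monotone_op A\<close> b(1,2) unfolding monotone_op_def by blast
    then have "0 \<le> l * inner (b1 - b2) (x1 - x2)"
      using \<open>l > 0\<close> by simp
    then show "0 \<le> inner (u1 - u2) (x1 - x2)"
      by (simp add: b(3,4) flip: scaleR_diff_right)
  qed
next
  fix x u assume h: "\<And>a b. b \<in> ?A a \<Longrightarrow> 0 \<le> inner (u - b) (x - a)"
  have "(1/l) *\<^sub>R u \<in> A (x + z)"
  proof (rule maximal_monotoneD[OF assms(1)])
    fix a b assume "b \<in> A a"
    then have "l *\<^sub>R b \<in> ?A (a - z)"
      by auto
    from h[OF this] have "0 \<le> (1/l) * inner (u - l *\<^sub>R b) (x - (a - z))"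
      using \<open>l > 0\<close> by simp
    also have "\<dots> = inner ((1/l) *\<^sub>R u - b) (x + z - a)"
      using \<open>l > 0\<close> by (simp add: inner_diff_left inner_diff_right algebra_simps)
    finally show "0 \<le> inner ((1/l) *\<^sub>R u - b) (x + z - a)" .
  qed
  then have "l *\<^sub>R ((1/l) *\<^sub>R u) \<in> ?A x"
    by blast
  then show "u \<in> ?A x"
    using \<open>l > 0\<close> by simp
qed

lemma resolvent_exists:
  fixes A :: "'a::{real_inner,complete_space} \<Rightarrow> 'a set"
  assumes "maximal_monotone A" and "l > 0"
  shows "\<exists>x. (1/l) *\<^sub>R (z - x) \<in> A x"
proof -
  obtain y where "- y \<in> (\<lambda>b. l *\<^sub>R b) ` A (y + z)"
    using maximal_monotone_minty[OF maximal_monotone_shift_scale[OF assms]] by blast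
  then obtain b where "b \<in> A (y + z)" "- y = l *\<^sub>R b"
    by auto
  moreover from this have "(1/l) *\<^sub>R (z - (y + z)) = b"
    using \<open>l > 0\<close> by (simp add: field_simps)
  ultimately show ?thesis
    by metis
qed

lemma resolvent_nonexpansive:
  fixes A :: "'a::real_inner \<Rightarrow> 'a set"
  assumes "monotone_op A" and "l > 0"
    and "(1/l) *\<^sub>R (z1 - x1) \<in> A x1" and "(1/l) *\<^sub>R (z2 - x2) \<in> A x2"
  shows "norm (x1 - x2) \<le> norm (z1 - z2)"
proof -
  have "0 \<le> inner ((1/l) *\<^sub>R (z1 - x1) - (1/l) *\<^sub>R (z2 - x2)) (x1 - x2)"
    using assms(1,3,4) unfolding monotone_op_def by blast
  also have "\<dots> = (1/l) * (inner (z1 - z2) (x1 - x2) - inner (x1 - x2) (x1 - x2))"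
    by (simp add: inner_diff_left inner_diff_right algebra_simps)
  finally have "(norm (x1 - x2))\<^sup>2 \<le> inner (z1 - z2) (x1 - x2)"
    using \<open>l > 0\<close> by (simp add: zero_le_divide_iff power2_norm_eq_inner)
  also have "\<dots> \<le> norm (z1 - z2) * norm (x1 - x2)"
    by (rule norm_cauchy_schwarz)
  finally show ?thesis
    by (cases "x1 = x2") (simp_all add: power2_eq_square mult_le_cancel_right)
qed

lemma resolvent_add_lipschitz_exists:
  fixes A :: "'a::{real_inner,complete_space} \<Rightarrow> 'a set" and D :: "'a \<Rightarrow> 'a"
  assumes "maximal_monotone A" and "K-lipschitz_on UNIV D"
  obtains l p where "l > 0" and "(1/l) *\<^sub>R (w - p) + v - D p \<in> A p"
proof -
  have "monotone_op A"
    using assms(1) unfolding maximal_monotone_def by simp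
  define l where "l = 1 / (2 * (K + 1))"
  have "l > 0" "l * K \<le> 1/2"
    using lipschitz_on_nonneg[OF assms(2)] unfolding l_def by (auto simp: field_simps)
  define J where "J z = (SOME x. (1/l) *\<^sub>R (z - x) \<in> A x)" for z
  have J: "(1/l) *\<^sub>R (z - J z) \<in> A (J z)" for z
    unfolding J_def using resolvent_exists[OF assms(1) \<open>l > 0\<close>] by (rule someI_ex)
  define T where "T p = J (w + l *\<^sub>R (v - D p))" for p
  have "\<exists>!p. T p = p"
  proof (rule banach_fix_type[where c = "1/2"])
    show "\<forall>x y. dist (T x) (T y) \<le> 1/2 * dist x y"
    proof (intro allI)
      fix x y
      have "norm (T x - T y) \<le> norm ((w + l *\<^sub>R (v - D x)) - (w + l *\<^sub>R (v - D y)))"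
        unfolding T_def by (rule resolvent_nonexpansive[OF \<open>monotone_op A\<close> \<open>l > 0\<close> J J])
      also have "\<dots> = l * dist (D x) (D y)"
        using \<open>l > 0\<close> by (simp add: dist_norm norm_minus_commute flip: scaleR_diff_right)
      also have "\<dots> \<le> l * (K * dist x y)"
        using lipschitz_onD[OF assms(2)] \<open>l > 0\<close> by (simp add: mult_left_mono)
      also have "\<dots> \<le> 1/2 * dist x y"
        using mult_right_mono[OF \<open>l * K \<le> 1/2\<close> zero_le_dist[of x y]] by (simp add: mult.assoc)
      finally show "dist (T x) (T y) \<le> 1/2 * dist x y"
        by (simp add: dist_norm)
    qed
  qed auto
  then obtain p where "T p = p"
    by blast
  then have "(1/l) *\<^sub>R ((w + l *\<^sub>R (v - D p)) - p) \<in> A p"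
    using J[of "w + l *\<^sub>R (v - D p)"] unfolding T_def by simp
  moreover have "(1/l) *\<^sub>R ((w + l *\<^sub>R (v - D p)) - p) = (1/l) *\<^sub>R (w - p) + v - D p"
    using \<open>l > 0\<close> by (simp add: algebra_simps)
  ultimately show ?thesis
    using that \<open>l > 0\<close> by simp
qed

lemma maximal_monotone_add_lipschitz:
  fixes A :: "'a::{real_inner,complete_space} \<Rightarrow> 'a set" and D :: "'a \<Rightarrow> 'a"
  assumes "maximal_monotone A" and "K-lipschitz_on UNIV D"
    and h: "\<And>p q. q \<in> A p \<Longrightarrow> 0 \<le> inner (q + D p - v) (p - w)"
  shows "v - D w \<in> A w"
proof -
  obtain l p where "l > 0" and q: "(1/l) *\<^sub>R (w - p) + v - D p \<in> A p"
    using resolvent_add_lipschitz_exists[OF assms(1,2)] by blast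
  from h[OF q] have "0 \<le> (1/l) * inner (w - p) (p - w)"
    by simp
  then have "0 \<le> inner (w - p) (p - w)"
    using \<open>l > 0\<close> by (simp add: zero_le_divide_iff)
  moreover have "inner (w - p) (p - w) = - (norm (p - w))\<^sup>2"
    by (metis inner_minus_left minus_diff_eq power2_norm_eq_inner)
  ultimately have "p = w"
    by simp
  with q show ?thesis
    by simp
qed

lemma weakly_converges_tendsto_diff:
  assumes "weakly_converges x w" and "(\<lambda>n. x n - y n) \<longlonglongrightarrow> 0"
  shows "weakly_converges y w"
  unfolding weakly_converges_def
proof
  fix h
  have "(\<lambda>n. inner (x n) h) \<longlonglongrightarrow> inner w h"
    using assms(1) unfolding weakly_converges_def by blast
  then have "(\<lambda>n. inner (x n) h - inner (x n - y n) h) \<longlonglongrightarrow> inner w h - inner 0 h"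
    by (rule tendsto_diff) (intro tendsto_inner assms(2) tendsto_const)
  then show "(\<lambda>n. inner (y n) h) \<longlonglongrightarrow> inner w h"
    by (simp add: inner_diff_left)
qed

lemma inner_tendsto_zero_Bseq:
  fixes v y :: "nat \<Rightarrow> 'a::real_inner"
  assumes "v \<longlonglongrightarrow> 0" and "Bseq y"
  shows "(\<lambda>n. inner (v n) (y n)) \<longlonglongrightarrow> 0"
proof -
  obtain R where R: "\<And>n. norm (y n) \<le> R"
    using \<open>Bseq y\<close> by (metis BseqE)
  show ?thesis
  proof (rule Lim_null_comparison)
    show "(\<lambda>n. norm (v n) * R) \<longlonglongrightarrow> 0"
      using tendsto_norm_zero[OF assms(1)] by (rule tendsto_mult_left_zero)
    have "norm (inner (v n) (y n)) \<le> norm (v n) * R" for n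
      using Cauchy_Schwarz_ineq2[of "v n" "y n"] R[of n]
      by (simp add: order_trans[OF _ mult_left_mono])
    then show "\<forall>\<^sub>F n in sequentially. norm (inner (v n) (y n)) \<le> norm (v n) * R"
      by simp
  qed
qed

lemma maximal_monotone_add_weak_strong_closed:
  fixes A :: "'a::{real_inner,complete_space} \<Rightarrow> 'a set" and D :: "'a \<Rightarrow> 'a"
  assumes "maximal_monotone A" and "K-lipschitz_on UNIV D" and "monotone_fun D"
    and a: "\<And>n. a n \<in> A (y n)" and v_lim: "(\<lambda>n. a n + D (y n)) \<longlonglongrightarrow> 0"
    and "weakly_converges y w" and "Bseq y"
  shows "- D w \<in> A w"
proof -
  have "0 \<le> inner (q + D p - 0) (p - w)" if "q \<in> A p" for p q
  proof -
    define h where "h = q + D p"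
    have "0 \<le> inner (a n - q) (y n - p) + inner (D (y n) - D p) (y n - p)" for n
      using assms(1,3) a \<open>q \<in> A p\<close> unfolding maximal_monotone_def monotone_op_def monotone_fun_def
      by (simp add: add_nonneg_nonneg)
    then have ineq: "0 \<le> inner h (p - y n) - inner (a n + D (y n)) (p - y n)" for n
      unfolding h_def by (simp add: inner_simps algebra_simps)
    have "(\<lambda>n. inner (y n) h) \<longlonglongrightarrow> inner w h"
      using \<open>weakly_converges y w\<close> unfolding weakly_converges_def by blast
    then have "(\<lambda>n. inner h p - inner (y n) h) \<longlonglongrightarrow> inner h p - inner w h"
      by (intro tendsto_diff tendsto_const)
    then have "(\<lambda>n. inner h (p - y n)) \<longlonglongrightarrow> inner h (p - w)"
      by (simp add: inner_diff_right inner_commute)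
    moreover obtain R where "\<And>n. norm (y n) \<le> R"
      using \<open>Bseq y\<close> by (metis BseqE)
    then have "Bseq (\<lambda>n. p - y n)"
      using norm_triangle_ineq4[of p] by (intro BseqI'[where K = "norm p + R"]) (meson add_left_mono order_trans)
    then have "(\<lambda>n. inner (a n + D (y n)) (p - y n)) \<longlonglongrightarrow> 0"
      by (rule inner_tendsto_zero_Bseq[OF v_lim])
    ultimately have "0 \<le> inner h (p - w) - 0"
      using ineq by (intro LIMSEQ_le[OF tendsto_const tendsto_diff]) auto
    then show ?thesis
      unfolding h_def by simp
  qed
  then have "0 - D w \<in> A w"
    by (rule maximal_monotone_add_lipschitz[OF assms(1,2)])
  then show ?thesis
    by simp
qed

section \<open>Strongly positive operators and Opial's lemma\<close>

locale strongly_positive =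
  fixes S :: "'a::{real_inner,complete_space} \<Rightarrow> 'a"
  assumes strongly_pos: "strongly_pos_sa S"
begin

sublocale bounded_linear S
  using strongly_pos unfolding strongly_pos_sa_def by simp

lemma symmetric: "inner (S x) y = inner x (S y)"
  using strongly_pos unfolding strongly_pos_sa_def by blast

lemma coercive:
  obtains m where "m > 0" and "\<And>x. m * (norm x)\<^sup>2 \<le> inner (S x) x"
  using strongly_pos unfolding strongly_pos_sa_def by blast

lemma norm_bounded_below:
  obtains m where "m > 0" and "\<And>x. m * norm x \<le> norm (S x)"
proof -
  obtain m where "m > 0" and m: "\<And>x. m * (norm x)\<^sup>2 \<le> inner (S x) x"
    using coercive by blast
  have "m * norm x \<le> norm (S x)" for x
  proof (cases "x = 0")
    case False
    have "norm x * (m * norm x) \<le> norm x * norm (S x)"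
      using m[of x] norm_cauchy_schwarz[of "S x" x] by (simp add: power2_eq_square algebra_simps)
    then show ?thesis
      using False by simp
  qed simp
  then show ?thesis
    using \<open>m > 0\<close> that by blast
qed

lemma inj_S: "inj S"
proof (rule injI)
  fix x y assume "S x = S y"
  obtain m where "m > 0" and "\<And>x. m * norm x \<le> norm (S x)"
    using norm_bounded_below by blast
  moreover have "S (x - y) = 0"
    using \<open>S x = S y\<close> by (simp add: diff)
  ultimately have "m * norm (x - y) \<le> 0"
    using \<open>\<And>x. m * norm x \<le> norm (S x)\<close>[of "x - y"] by simp
  then show "x = y"
    using \<open>m > 0\<close> by (simp add: mult_le_0_iff)
qed

lemma closed_range: "closed (range S)"
  unfolding closed_sequential_limits
proof (intro allI impI, elim conjE)
  fix s l assume "\<forall>n. s n \<in> range S" and "s \<longlonglongrightarrow> l"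
  then have "\<forall>n. \<exists>w. s n = S w"
    by blast
  then have "\<exists>z. \<forall>n. s n = S (z n)"
    by (rule choice)
  then obtain z where z: "\<And>n. s n = S (z n)"
    by blast
  obtain m where "m > 0" and m: "\<And>x. m * norm x \<le> norm (S x)"
    using norm_bounded_below by blast
  have "Cauchy z"
  proof (rule metric_CauchyI)
    fix e :: real assume "e > 0"
    then have "m * e > 0"
      using \<open>m > 0\<close> by simp
    then obtain N where N: "\<And>i k. N \<le> i \<Longrightarrow> N \<le> k \<Longrightarrow> dist (s i) (s k) < m * e"
      using \<open>s \<longlonglongrightarrow> l\<close>[THEN LIMSEQ_imp_Cauchy] unfolding Cauchy_def by blast
    have "dist (z i) (z k) < e" if "N \<le> i" "N \<le> k" for i k
    proof -
      have "m * norm (z i - z k) \<le> norm (s i - s k)"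
        using m[of "z i - z k"] by (simp add: z diff)
      also have "\<dots> < m * e"
        using N[OF that] by (simp add: dist_norm)
      finally show ?thesis
        using \<open>m > 0\<close> by (simp add: dist_norm)
    qed
    then show "\<exists>N. \<forall>i\<ge>N. \<forall>k\<ge>N. dist (z i) (z k) < e"
      by blast
  qed
  then obtain w where "z \<longlonglongrightarrow> w"
    using Cauchy_convergent_iff convergent_def by blast
  then have "s \<longlonglongrightarrow> S w"
    unfolding z by (rule tendsto)
  then show "l \<in> range S"
    using \<open>s \<longlonglongrightarrow> l\<close> LIMSEQ_unique by blast
qed

lemma surj_S: "surj S"
proof -
  have "y \<in> range S" for y
  proof -
    have "subspace (range S)"
      by (rule linear_subspace_image[OF linear subspace_UNIV])
    then obtain p where "p \<in> range S" and orth: "\<And>v. v \<in> range S \<Longrightarrow> inner (y - p) v = 0"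
      using orthogonal_projection_exists[OF closed_range] by blast
    obtain m where "m > 0" and m: "\<And>x. m * (norm x)\<^sup>2 \<le> inner (S x) x"
      using coercive by blast
    have "inner (S (y - p)) (y - p) = 0"
      using orth[of "S (y - p)"] by (simp add: inner_commute)
    then have "y - p = 0"
      using m[of "y - p"] \<open>m > 0\<close> by (simp add: mult_le_0_iff)
    then show ?thesis
      using \<open>p \<in> range S\<close> by simp
  qed
  then show ?thesis
    by blast
qed

lemma S_inv [simp]: "S (inv S y) = y"
  using surj_S by (simp add: surj_f_inv_f)

lemma inv_S [simp]: "inv S (S x) = x"
  using inj_S by simp

lemma inv_add: "inv S (a + b) = inv S a + inv S b"
proof -
  have "inv S (a + b) = inv S (S (inv S a + inv S b))"
    by (simp add: add)
  then show ?thesis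
    by simp
qed

lemma inv_scaleR: "inv S (c *\<^sub>R a) = c *\<^sub>R inv S a"
proof -
  have "inv S (c *\<^sub>R a) = inv S (S (c *\<^sub>R inv S a))"
    by (simp add: scaleR)
  then show ?thesis
    by simp
qed

lemma inv_diff: "inv S (a - b) = inv S a - inv S b"
  using inv_add[of a "- b"] inv_scaleR[of "- 1" b] by simp

lemma symmetric_inv: "inner (inv S a) b = inner a (inv S b)"
  using symmetric[of "inv S a" "inv S b"] by simp

lemma strongly_positive_inv: "strongly_positive (inv S)"
proof
  obtain m where "m > 0" and m_norm: "\<And>x. m * norm x \<le> norm (S x)"
    using norm_bounded_below by blast
  have "bounded_linear (inv S)"
  proof (rule bounded_linear_intro[where K = "1 / m"])
    show "norm (inv S y) \<le> norm y * (1 / m)" for y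
      using m_norm[of "inv S y"] \<open>m > 0\<close> by (simp add: field_simps)
  qed (simp_all add: inv_add inv_scaleR)
  moreover obtain c where "c > 0" and c: "\<And>x. c * (norm x)\<^sup>2 \<le> inner (S x) x"
    using coercive by blast
  moreover obtain K where "K > 0" and K: "\<And>x. norm (S x) \<le> norm x * K"
    using pos_bounded by blast
  have "c / K\<^sup>2 * (norm u)\<^sup>2 \<le> inner (inv S u) u" for u
  proof -
    have "norm u \<le> norm (inv S u) * K"
      using K[of "inv S u"] by simp
    then have "(norm u)\<^sup>2 \<le> (norm (inv S u) * K)\<^sup>2"
      by (rule power_mono) simp
    then have "(norm u)\<^sup>2 \<le> K\<^sup>2 * (norm (inv S u))\<^sup>2"
      by (simp add: power_mult_distrib mult.commute)
    then have "c / K\<^sup>2 * (norm u)\<^sup>2 \<le> c * (norm (inv S u))\<^sup>2"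
      using \<open>c > 0\<close> \<open>K > 0\<close> by (simp add: field_simps)
    also have "\<dots> \<le> inner (inv S u) u"
      using c[of "inv S u"] by (simp add: inner_commute)
    finally show ?thesis .
  qed
  moreover have "c / K\<^sup>2 > 0"
    using \<open>c > 0\<close> \<open>K > 0\<close> by simp
  ultimately show "strongly_pos_sa (inv S)"
    unfolding strongly_pos_sa_def using symmetric_inv by blast
qed

lemma inner_S_nonneg: "0 \<le> inner (S x) x"
proof -
  obtain m where "m > 0" and "m * (norm x)\<^sup>2 \<le> inner (S x) x"
    using coercive by blast
  moreover have "0 \<le> m * (norm x)\<^sup>2"
    using \<open>m > 0\<close> by simp
  ultimately show ?thesis
    by linarith
qed

lemma normS_sq: "(normS S x)\<^sup>2 = inner (S x) x"
  unfolding normS_def using inner_S_nonneg by simp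

lemma normS_nonneg: "0 \<le> normS S x"
  unfolding normS_def using inner_S_nonneg by simp

lemma normS_eq_0_iff: "normS S x = 0 \<longleftrightarrow> x = 0"
proof
  assume "normS S x = 0"
  then have "inner (S x) x = 0"
    unfolding normS_def using inner_S_nonneg by simp
  moreover obtain m where "m > 0" and "m * (norm x)\<^sup>2 \<le> inner (S x) x"
    using coercive by blast
  ultimately show "x = 0"
    by (simp add: mult_le_0_iff)
qed (simp add: normS_def)

lemma normS_scaleR: "normS S (c *\<^sub>R x) = \<bar>c\<bar> * normS S x"
proof -
  have "inner (S (c *\<^sub>R x)) (c *\<^sub>R x) = c\<^sup>2 * inner (S x) x"
    by (simp add: scaleR power2_eq_square)
  then show ?thesis
    unfolding normS_def by (simp add: real_sqrt_mult)
qed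

lemma normS_minus_commute: "normS S (a - b) = normS S (b - a)"
  using normS_scaleR[of "- 1" "a - b"] by simp

lemma normS_inv: "normS S (inv S u) = normS (inv S) u"
  unfolding normS_def by (simp add: inner_commute)

lemma normS_diff_sq: "(normS S (a - b))\<^sup>2 = (normS S a)\<^sup>2 - 2 * inner (S a) b + (normS S b)\<^sup>2"
proof -
  have "inner (S b) a = inner (S a) b"
    unfolding symmetric[of b a] by (rule inner_commute)
  then show ?thesis
    unfolding normS_sq diff inner_diff_left inner_diff_right by simp
qed

lemma polarization:
  "2 * inner (S (p - q)) r = (normS S p)\<^sup>2 - (normS S q)\<^sup>2 - (normS S (p - r))\<^sup>2 + (normS S (q - r))\<^sup>2"
  unfolding normS_diff_sq by (simp add: diff inner_diff_left)

lemma Cauchy_Schwarz_S: "\<bar>inner (S a) v\<bar> \<le> normS S a * normS S v"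
proof (cases "v = 0")
  case False
  define q where "q = (normS S v)\<^sup>2"
  define r where "r = inner (S a) v / q"
  have "0 < q"
    using False normS_nonneg[of v] normS_eq_0_iff[of v] unfolding q_def by simp
  then have rq: "inner (S a) v = r * q"
    unfolding r_def by simp
  have "0 \<le> (normS S (a - r *\<^sub>R v))\<^sup>2"
    by simp
  also have "\<dots> = (normS S a)\<^sup>2 - r\<^sup>2 * q"
    unfolding normS_diff_sq normS_scaleR q_def inner_scaleR_right rq
    by (simp add: power_mult_distrib power2_eq_square q_def)
  finally have "r\<^sup>2 * q * q \<le> (normS S a)\<^sup>2 * q"
    using \<open>0 < q\<close> by (simp add: mult_right_mono)
  then have "(inner (S a) v)\<^sup>2 \<le> (normS S a * normS S v)\<^sup>2"
    unfolding rq by (simp add: power_mult_distrib q_def power2_eq_square mult_ac)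
  then show ?thesis
    using normS_nonneg by (simp add: power2_le_iff_abs_le)
qed (simp add: normS_def zero)

lemma Cauchy_Schwarz_dual: "\<bar>inner u v\<bar> \<le> normS (inv S) u * normS S v"
  using Cauchy_Schwarz_S[of "inv S u" v] by (simp add: normS_inv)

lemma norm_le_normS:
  obtains c where "c > 0" and "\<And>v. norm v \<le> c * normS S v"
proof -
  obtain m where "m > 0" and m: "\<And>v. m * (norm v)\<^sup>2 \<le> inner (S v) v"
    using coercive by blast
  have "norm v \<le> (1 / sqrt m) * normS S v" for v
  proof -
    have "(sqrt m * norm v)\<^sup>2 \<le> (normS S v)\<^sup>2"
      using m[of v] \<open>m > 0\<close> by (simp add: normS_sq power_mult_distrib)
    then have "sqrt m * norm v \<le> normS S v"
      using normS_nonneg by (rule power2_le_imp_le)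
    then show ?thesis
      using \<open>m > 0\<close> by (simp add: field_simps)
  qed
  moreover have "1 / sqrt m > 0"
    using \<open>m > 0\<close> by simp
  ultimately show ?thesis
    using that by blast
qed

lemma normS_le_norm:
  obtains C where "C > 0" and "\<And>v. normS S v \<le> C * norm v"
proof -
  obtain K where "K > 0" and K: "\<And>x. norm (S x) \<le> norm x * K"
    using pos_bounded by blast
  have "normS S v \<le> sqrt K * norm v" for v
  proof -
    have "(normS S v)\<^sup>2 \<le> norm (S v) * norm v"
      unfolding normS_sq by (rule norm_cauchy_schwarz)
    also have "\<dots> \<le> norm v * K * norm v"
      using K[of v] by (simp add: mult_right_mono)
    also have "\<dots> = K * (norm v)\<^sup>2"
      by (simp add: power2_eq_square)
    also have "\<dots> = (sqrt K * norm v)\<^sup>2"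
      using \<open>K > 0\<close> by (simp add: power_mult_distrib)
    finally show ?thesis
      by (rule power2_le_imp_le) (use \<open>K > 0\<close> in simp)
  qed
  moreover have "sqrt K > 0"
    using \<open>K > 0\<close> by simp
  ultimately show ?thesis
    using that by blast
qed

end

context strongly_positive
begin

lemma lipschitz_wrt_imp_lipschitz_on:
  assumes "lipschitz_wrt S L T" and "0 \<le> L"
  shows "\<exists>K. K-lipschitz_on UNIV T"
proof -
  obtain c where "c > 0" and c: "\<And>u. norm u \<le> c * normS (inv S) u"
    using strongly_positive.norm_le_normS[OF strongly_positive_inv] by blast
  obtain C where "C > 0" and C: "\<And>v. normS S v \<le> C * norm v"
    using normS_le_norm by blast
  have "dist (T x) (T y) \<le> (c * L * C) * dist x y" for x y
  proof -
    have "norm (T x - T y) \<le> c * normS (inv S) (T x - T y)"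
      by (rule c)
    also have "\<dots> \<le> c * (L * normS S (x - y))"
      using assms(1) \<open>c > 0\<close> unfolding lipschitz_wrt_def by (simp add: mult_left_mono)
    also have "\<dots> \<le> c * (L * (C * norm (x - y)))"
      using C[of "x - y"] \<open>c > 0\<close> assms(2) by (simp add: mult_left_mono)
    finally show ?thesis
      by (simp add: dist_norm mult_ac)
  qed
  moreover have "0 \<le> c * L * C"
    using \<open>c > 0\<close> \<open>C > 0\<close> assms(2) by simp
  ultimately show ?thesis
    by (auto intro: lipschitz_onI)
qed

lemma cocoercive_lower_bound:
  assumes "cocoercive_wrt S \<beta> C"
  shows "(1 / \<beta>) * (normS (inv S) (C x - C y))\<^sup>2 \<le> inner (C x - C y) (x - y)"
  using assms unfolding cocoercive_wrt_def by blast

lemma cocoercive_imp_monotone: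
  assumes "cocoercive_wrt S \<beta> C" and "\<beta> > 0"
  shows "monotone_fun C"
  unfolding monotone_fun_def
proof (intro allI)
  fix x y
  have "0 \<le> (1 / \<beta>) * (normS (inv S) (C x - C y))\<^sup>2"
    using \<open>\<beta> > 0\<close> by simp
  then show "0 \<le> inner (C x - C y) (x - y)"
    using cocoercive_lower_bound[OF assms(1)] order_trans by blast
qed

lemma cocoercive_imp_lipschitz_wrt:
  assumes "cocoercive_wrt S \<beta> C" and "\<beta> > 0"
  shows "lipschitz_wrt S \<beta> C"
  unfolding lipschitz_wrt_def
proof (intro allI)
  fix x y
  define s where "s = normS (inv S) (C x - C y)"
  have "(1 / \<beta>) * s\<^sup>2 \<le> s * normS S (x - y)"
    using cocoercive_lower_bound[OF assms(1), of x y] Cauchy_Schwarz_dual[of "C x - C y" "x - y"]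
    unfolding s_def by linarith
  then have "s * s \<le> s * (\<beta> * normS S (x - y))"
    using \<open>\<beta> > 0\<close> by (simp add: field_simps power2_eq_square)
  moreover have "0 \<le> s"
    unfolding s_def by (rule strongly_positive.normS_nonneg[OF strongly_positive_inv])
  moreover have "0 \<le> \<beta> * normS S (x - y)"
    using \<open>\<beta> > 0\<close> normS_nonneg by simp
  ultimately show "s \<le> \<beta> * normS S (x - y)"
    unfolding s_def[symmetric] by (cases "s = 0") auto
qed

lemma cocoercive_three_point:
  assumes "cocoercive_wrt S \<beta> C" and "\<beta> > 0"
  shows "- (\<beta> / 4) * (normS S (x - y))\<^sup>2 \<le> inner (C x - C z) (y - z)"
proof -
  define s where "s = normS (inv S) (C x - C z)"
  define t where "t = normS S (x - y)"
  have "s\<^sup>2 / \<beta> \<le> inner (C x - C z) (x - z)"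
    using cocoercive_lower_bound[OF assms(1), of x z] unfolding s_def by simp
  moreover have "inner (C x - C z) (x - y) \<le> s * t"
    using Cauchy_Schwarz_dual[of "C x - C z" "x - y"] unfolding s_def t_def by simp
  moreover have "inner (C x - C z) (y - z) = inner (C x - C z) (x - z) - inner (C x - C z) (x - y)"
    by (simp add: inner_diff_right)
  moreover have "0 \<le> (s - \<beta> / 2 * t)\<^sup>2 / \<beta>"
    using \<open>\<beta> > 0\<close> by simp
  moreover have "(s - \<beta> / 2 * t)\<^sup>2 / \<beta> = s\<^sup>2 / \<beta> - s * t + \<beta> / 4 * t\<^sup>2"
    using \<open>\<beta> > 0\<close> by (simp add: field_simps power2_eq_square)
  ultimately show ?thesis
    unfolding t_def by argo
qed

text \<open>Polarisation turns convergence of the distances to \<open>w0\<close> and \<open>w1\<close> into convergence of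
  \<open>inner (x n) (S (w0 - w1))\<close>, whose limit is then both \<open>inner w0 (S (w0 - w1))\<close> and
  \<open>inner w1 (S (w0 - w1))\<close>.\<close>

lemma weak_cluster_points_eq:
  assumes "convergent (\<lambda>n. normS S (x n - w0))" and "convergent (\<lambda>n. normS S (x n - w1))"
    and "strict_mono \<sigma>0" and "weakly_converges (x \<circ> \<sigma>0) w0"
    and "strict_mono \<sigma>1" and "weakly_converges (x \<circ> \<sigma>1) w1"
  shows "w0 = w1"
proof -
  define d where "d = S (w0 - w1)"
  have "2 * inner (x n) d = (normS S w0)\<^sup>2 - (normS S w1)\<^sup>2 - (normS S (x n - w0))\<^sup>2
      + (normS S (x n - w1))\<^sup>2" for n
    using polarization[of w0 w1 "x n"] unfolding d_def
    by (simp add: inner_commute normS_minus_commute)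
  moreover have sq_conv: "convergent (\<lambda>n. (normS S (x n - w))\<^sup>2)"
    if "convergent (\<lambda>n. normS S (x n - w))" for w
    using that by (auto simp: convergent_def intro: tendsto_power)
  then have "convergent (\<lambda>n. (normS S w0)\<^sup>2 - (normS S w1)\<^sup>2 - (normS S (x n - w0))\<^sup>2
      + (normS S (x n - w1))\<^sup>2)"
    using assms(1,2) by (intro convergent_add convergent_diff convergent_const)
  ultimately have "convergent (\<lambda>n. 2 * inner (x n) d)"
    by simp
  then obtain L where lim: "(\<lambda>n. inner (x n) d) \<longlonglongrightarrow> L"
    by (auto simp: convergent_def dest: tendsto_mult_left[where c = "1/2"])
  have "inner w0 d = L"
    using LIMSEQ_subseq_LIMSEQ[OF lim assms(3)] assms(4) LIMSEQ_unique
    unfolding weakly_converges_def o_def by blast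
  moreover have "inner w1 d = L"
    using LIMSEQ_subseq_LIMSEQ[OF lim assms(5)] assms(6) LIMSEQ_unique
    unfolding weakly_converges_def o_def by blast
  ultimately have "(normS S (w0 - w1))\<^sup>2 = 0"
    unfolding normS_sq d_def by (simp add: inner_diff_left inner_commute[of "S (w0 - w1)"])
  then show ?thesis
    using normS_eq_0_iff by simp
qed

lemma Bseq_if_normS_dist_convergent:
  assumes "convergent (\<lambda>n. normS S (x n - z))"
  shows "Bseq x"
proof -
  obtain K where K: "\<And>n. norm (normS S (x n - z)) \<le> K"
    using convergent_imp_Bseq[OF assms] by (metis BseqE)
  obtain c where "c > 0" and c: "\<And>v. norm v \<le> c * normS S v"
    using norm_le_normS by blast
  have "norm (x n) \<le> norm z + c * K" for n
  proof -
    have "norm (x n) \<le> norm z + norm (x n - z)"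
      by (rule norm_triangle_sub)
    also have "\<dots> \<le> norm z + c * K"
      using c[of "x n - z"] K[of n] \<open>c > 0\<close> by (simp add: order_trans[OF _ mult_left_mono])
    finally show ?thesis .
  qed
  then show ?thesis
    by (rule BseqI')
qed

lemma opial:
  assumes "F \<noteq> {}"
    and dist_conv: "\<And>z. z \<in> F \<Longrightarrow> convergent (\<lambda>n. normS S (x n - z))"
    and cluster: "\<And>\<sigma> w. strict_mono \<sigma> \<Longrightarrow> weakly_converges (x \<circ> \<sigma>) w \<Longrightarrow> w \<in> F"
  shows "\<exists>z\<in>F. weakly_converges x z"
proof -
  obtain z0 where "z0 \<in> F"
    using \<open>F \<noteq> {}\<close> by blast
  then have "Bseq x"
    by (rule Bseq_if_normS_dist_convergent[OF dist_conv])
  then have bounded: "Bseq (x \<circ> \<tau>)" for \<tau> :: "nat \<Rightarrow> nat"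
    unfolding o_def by (rule Bseq_subseq)
  obtain \<sigma>0 w0 where "strict_mono \<sigma>0" "weakly_converges (x \<circ> \<sigma>0) w0"
    using weakly_convergent_subseq[OF bounded[of id]] by auto
  then have "w0 \<in> F"
    by (rule cluster)
  have "(\<lambda>n. inner (x n) h) \<longlonglongrightarrow> inner w0 h" for h
  proof (rule LIMSEQ_if_subseqs_have_LIMSEQ_subseq)
    fix \<tau> :: "nat \<Rightarrow> nat" assume "strict_mono \<tau>"
    obtain \<rho> w1 where "strict_mono \<rho>" "weakly_converges (x \<circ> \<tau> \<circ> \<rho>) w1"
      using weakly_convergent_subseq[OF bounded[of \<tau>]] by (auto simp: o_assoc)
    moreover have "strict_mono (\<tau> \<circ> \<rho>)"
      using \<open>strict_mono \<tau>\<close> \<open>strict_mono \<rho>\<close> by (rule strict_mono_o)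
    ultimately have "w1 = w0"
      using weak_cluster_points_eq[OF dist_conv dist_conv, of w1 w0 "\<tau> \<circ> \<rho>" \<sigma>0]
        cluster \<open>w0 \<in> F\<close> \<open>strict_mono \<sigma>0\<close> \<open>weakly_converges (x \<circ> \<sigma>0) w0\<close>
      by (simp add: o_assoc)
    then show "\<exists>\<rho>. strict_mono \<rho> \<and> ((\<lambda>n. inner (x n) h) \<circ> \<tau> \<circ> \<rho>) \<longlonglongrightarrow> inner w0 h"
      using \<open>strict_mono \<rho>\<close> \<open>weakly_converges (x \<circ> \<tau> \<circ> \<rho>) w1\<close>
      unfolding weakly_converges_def o_def by auto
  qed
  then show ?thesis
    using \<open>w0 \<in> F\<close> unfolding weakly_converges_def by blast
qed

end

section \<open>Convergence of the iteration\<close>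

lemma nonneg_descent_summable:
  fixes W d :: "nat \<Rightarrow> real"
  assumes "\<And>n. 0 \<le> W n" and "\<And>n. 0 \<le> d n" and descent: "\<And>n. W (Suc n) + d n \<le> W n"
  shows "summable d"
proof (rule summableI_nonneg_bounded)
  have partial: "W n + (\<Sum>i<n. d i) \<le> W 0" for n
  proof (induction n)
    case (Suc n)
    then show ?case
      using descent[of n] by simp
  qed simp
  show "(\<Sum>i<n. d i) \<le> W 0" for n
    using partial[of n] assms(1)[of n] by linarith
qed fact

text \<open>The iterates \<open>x\<close>, \<open>y\<close>, \<open>u\<close> of NFBHF-M under the hypotheses of the theorem; the
  initial values \<open>x 0\<close> and \<open>u 0\<close> are arbitrary and play no role.\<close>

locale nfbhf_iteration =
  fixes S :: "'a::{real_inner,complete_space} \<Rightarrow> 'a"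
    and A :: "'a \<Rightarrow> 'a set" and B C :: "'a \<Rightarrow> 'a"
    and \<mu> \<beta> \<gamma> \<epsilon> :: real
    and gam L :: "nat \<Rightarrow> real" and M :: "nat \<Rightarrow> 'a \<Rightarrow> 'a"
    and x y u :: "nat \<Rightarrow> 'a"
  assumes strongly_pos: "strongly_pos_sa S"
    and A_maximal: "maximal_monotone A"
    and B_monotone: "monotone_fun B" and mu_nonneg: "\<mu> \<ge> 0" and B_lipschitz: "lipschitz_wrt S \<mu> B"
    and beta_pos: "\<beta> > 0" and C_cocoercive: "cocoercive_wrt S \<beta> C"
    and zer_nonempty: "zer3 A B C \<noteq> {}"
    and gamma_pos: "\<gamma> > 0" and gam_ge: "\<And>k. gam k \<ge> \<gamma>"
    and L_bounds: "\<And>k. 0 \<le> L k \<and> L k < 1"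
    and M_lipschitz: "\<And>k. lipschitz_wrt S (L k) (\<lambda>z. gam k *\<^sub>R M k z - S z)"
    and eps_pos: "\<epsilon> > 0"
    and step_size: "\<And>k. k \<ge> 1 \<Longrightarrow>
        1 - L (k - 1) - L k - 2 * gam k * L k * \<mu> - (gam k)\<^sup>2 * \<mu>\<^sup>2 - gam k * \<beta> / 2 \<ge> \<epsilon>"
    and y_step: "\<And>k. M k (x k) - (B (x k) + C (x k)) + (1 / gam k) *\<^sub>R u k
                     \<in> (\<lambda>a. M k (y k) + a) ` A (y k)"
    and x_step: "\<And>k. x (Suc k) = y k - gam k *\<^sub>R inv S (B (y k)) + gam k *\<^sub>R inv S (B (x k))"
    and u_step: "\<And>k. u (Suc k) = (gam k *\<^sub>R M k (y k) - S (y k)) - (gam k *\<^sub>R M k (x k) - S (x k))"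
begin

sublocale strongly_positive S
  by (rule strongly_positive.intro) (rule strongly_pos)

lemma mem_zer3_iff: "z \<in> zer3 A B C \<longleftrightarrow> - B z - C z \<in> A z"
proof
  assume "z \<in> zer3 A B C"
  then obtain a where "a \<in> A z" and "0 = a + B z + C z"
    unfolding zer3_def by auto
  moreover have "a = (a + B z + C z) - B z - C z"
    by simp
  ultimately show "- B z - C z \<in> A z"
    by simp
next
  assume "- B z - C z \<in> A z"
  then show "z \<in> zer3 A B C"
    unfolding zer3_def by (auto intro: image_eqI[where x = "- B z - C z"])
qed

lemma gam_pos: "gam k > 0"
  using gam_ge[of k] gamma_pos by linarith

lemma L_nonneg: "0 \<le> L k" and L_less_1: "L k < 1"
  using L_bounds[of k] by auto

lemma step_size_Suc:
  "\<epsilon> \<le> 1 - L n - L (Suc n) - 2 * gam (Suc n) * L (Suc n) * \<mu> - (gam (Suc n))\<^sup>2 * \<mu>\<^sup>2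
        - gam (Suc n) * \<beta> / 2"
  using step_size[of "Suc n"] by simp

lemma L_le_1_minus_eps: "L n \<le> 1 - \<epsilon>"
proof -
  have "0 \<le> 2 * gam (Suc n) * L (Suc n) * \<mu>" "0 \<le> gam (Suc n) * \<beta> / 2"
    "0 \<le> (gam (Suc n))\<^sup>2 * \<mu>\<^sup>2"
    using gam_pos[of "Suc n"] L_nonneg[of "Suc n"] mu_nonneg beta_pos by simp_all
  then show ?thesis
    using step_size_Suc[of n] L_nonneg[of "Suc n"] by argo
qed

definition residual :: "nat \<Rightarrow> real" where
  "residual n = normS S (x n - y n)"

definition alpha :: "nat \<Rightarrow> 'a" where
  "alpha k = M k (x k) - (B (x k) + C (x k)) + (1 / gam k) *\<^sub>R u k - M k (y k)"

lemma alpha_mem: "alpha k \<in> A (y k)"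
  using y_step[of k] unfolding alpha_def by (force simp: algebra_simps)

lemma gam_alpha_eq:
  "gam k *\<^sub>R alpha k = S (x k - y k) - u (Suc k) - gam k *\<^sub>R (B (x k) + C (x k)) + u k"
proof -
  have "gam k *\<^sub>R (M k (x k) - M k (y k)) = S (x k - y k) - u (Suc k)"
    unfolding u_step by (simp add: diff algebra_simps)
  then show ?thesis
    unfolding alpha_def using gam_pos[of k] by (simp add: algebra_simps)
qed

lemma residual_nonneg: "0 \<le> residual n"
  unfolding residual_def by (rule normS_nonneg)

lemma u_Suc_bound: "normS (inv S) (u (Suc k)) \<le> L k * residual k"
  using M_lipschitz[of k] unfolding lipschitz_wrt_def residual_def u_step
  by (metis normS_minus_commute)

lemma inner_u_Suc_le: "\<bar>inner (u (Suc k)) v\<bar> \<le> L k * residual k * normS S v"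
  using Cauchy_Schwarz_dual[of "u (Suc k)" v] u_Suc_bound[of k] normS_nonneg[of v]
  by (meson mult_right_mono order_trans)

lemma extrapolation_bound: "normS S (x (Suc k) - y k) \<le> gam k * \<mu> * residual k"
proof -
  have "x (Suc k) - y k = gam k *\<^sub>R inv S (B (x k) - B (y k))"
    unfolding x_step by (simp add: inv_diff inv_scaleR algebra_simps)
  then have "normS S (x (Suc k) - y k) = gam k * normS (inv S) (B (x k) - B (y k))"
    using gam_pos[of k] by (simp add: normS_scaleR normS_inv)
  also have "\<dots> \<le> gam k * (\<mu> * residual k)"
    using B_lipschitz gam_pos[of k] unfolding lipschitz_wrt_def residual_def
    by (simp add: mult_left_mono)
  finally show ?thesis
    by (simp add: mult.assoc)
qed

lemma monotonicity_inequality: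
  assumes "z \<in> zer3 A B C"
  shows "0 \<le> inner (S (x k - x (Suc k))) (y k - z) - gam k * inner (C (x k) - C z) (y k - z)
    - inner (u (Suc k)) (y k - z) + inner (u k) (y k - z)"
proof -
  have "0 \<le> inner (alpha k - (- B z - C z)) (y k - z)"
    using A_maximal alpha_mem assms unfolding mem_zer3_iff maximal_monotone_def monotone_op_def
    by blast
  then have "0 \<le> inner (gam k *\<^sub>R (alpha k - (- B z - C z))) (y k - z)"
    using gam_pos[of k] by simp
  moreover have "S (x k - y k) = S (x k - x (Suc k)) + gam k *\<^sub>R (B (x k) - B (y k))"
    unfolding x_step by (simp add: diff add scaleR algebra_simps)
  then have "gam k *\<^sub>R (alpha k - (- B z - C z)) = S (x k - x (Suc k)) - gam k *\<^sub>R (B (y k) - B z)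
      - gam k *\<^sub>R (C (x k) - C z) - u (Suc k) + u k"
    by (simp add: gam_alpha_eq algebra_simps)
  moreover have "0 \<le> gam k * inner (B (y k) - B z) (y k - z)"
    using B_monotone gam_pos[of k] unfolding monotone_fun_def by simp
  ultimately show ?thesis
    by (simp add: inner_diff_left inner_add_left)
qed

definition lyapunov :: "'a \<Rightarrow> nat \<Rightarrow> real" where
  "lyapunov z n = (normS S (x (Suc n) - z))\<^sup>2 + 2 * inner (u (Suc n)) (x (Suc n) - z)
    + L n * (residual n)\<^sup>2"

lemma inner_u_extrapolation_le:
  "2 * inner (u (Suc k)) (x (Suc k) - y k) \<le> 2 * gam k * L k * \<mu> * (residual k)\<^sup>2"
proof -
  have "inner (u (Suc k)) (x (Suc k) - y k) \<le> L k * residual k * (gam k * \<mu> * residual k)"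
    using inner_u_Suc_le[of k "x (Suc k) - y k"] extrapolation_bound[of k]
      mult_nonneg_nonneg[OF L_nonneg residual_nonneg]
    by (meson abs_le_D1 mult_left_mono order_trans)
  then show ?thesis
    by (simp add: power2_eq_square mult_ac)
qed

lemma inner_u_residual_le:
  "- (2 * inner (u (Suc n)) (x (Suc n) - y (Suc n)))
    \<le> L n * (residual n)\<^sup>2 + L n * (residual (Suc n))\<^sup>2"
proof -
  have "- inner (u (Suc n)) (x (Suc n) - y (Suc n)) \<le> L n * (residual n * residual (Suc n))"
    using inner_u_Suc_le[of n "x (Suc n) - y (Suc n)"] unfolding residual_def by simp
  moreover have "L n * (2 * residual n * residual (Suc n))
      \<le> L n * ((residual n)\<^sup>2 + (residual (Suc n))\<^sup>2)"
    using sum_squares_bound L_nonneg by (rule mult_left_mono)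
  ultimately show ?thesis
    by (simp add: algebra_simps)
qed

lemma inner_C_ge:
  "- (2 * (gam k * inner (C (x k) - C z) (y k - z))) \<le> gam k * \<beta> * (residual k)\<^sup>2 / 2"
proof -
  have "- (\<beta> / 4) * (residual k)\<^sup>2 \<le> inner (C (x k) - C z) (y k - z)"
    using cocoercive_three_point[OF C_cocoercive beta_pos] unfolding residual_def .
  then have "gam k * (- (\<beta> / 4) * (residual k)\<^sup>2) \<le> gam k * inner (C (x k) - C z) (y k - z)"
    by (rule mult_left_mono) (use gam_pos[of k] in simp)
  then show ?thesis
    by (simp add: algebra_simps)
qed

lemma lyapunov_decrease:
  assumes "z \<in> zer3 A B C"
  shows "lyapunov z (Suc n) \<le> lyapunov z n - \<epsilon> * (residual (Suc n))\<^sup>2"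
proof -
  define k where "k = Suc n"
  define g where "g = gam k"
  define t where "t = residual k"
  define c where "c = 1 - L n - L k - 2 * g * L k * \<mu> - g\<^sup>2 * \<mu>\<^sup>2 - g * \<beta> / 2"
  have polar: "2 * inner (S (x k - x (Suc k))) (y k - z) = (normS S (x k - z))\<^sup>2
      - (normS S (x (Suc k) - z))\<^sup>2 - t\<^sup>2 + (normS S (x (Suc k) - y k))\<^sup>2"
    using polarization[of "x k - z" "x (Suc k) - z" "y k - z"] unfolding t_def residual_def
    by simp
  have "(normS S (x (Suc k) - y k))\<^sup>2 \<le> (g * \<mu> * t)\<^sup>2"
    using extrapolation_bound[of k] normS_nonneg unfolding g_def t_def by (rule power_mono)
  then have extra: "(normS S (x (Suc k) - y k))\<^sup>2 \<le> g\<^sup>2 * \<mu>\<^sup>2 * t\<^sup>2"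
    by (simp add: power_mult_distrib)
  have "inner (u (Suc k)) (y k - z)
      = inner (u (Suc k)) (x (Suc k) - z) - inner (u (Suc k)) (x (Suc k) - y k)"
    "inner (u k) (y k - z) = inner (u k) (x k - z) - inner (u k) (x k - y k)"
    by (simp_all add: inner_diff_right)
  then have "lyapunov z k \<le> lyapunov z n - t\<^sup>2 + L n * t\<^sup>2 + L k * t\<^sup>2
      + 2 * g * L k * \<mu> * t\<^sup>2 + g\<^sup>2 * \<mu>\<^sup>2 * t\<^sup>2 + g * \<beta> * t\<^sup>2 / 2"
    using monotonicity_inequality[OF assms, of k] polar extra inner_C_ge[of k z]
      inner_u_extrapolation_le[of k] inner_u_residual_le[of n]
    unfolding lyapunov_def k_def g_def t_def by argo
  also have "\<dots> = lyapunov z n - c * t\<^sup>2"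
    unfolding c_def by (simp add: algebra_simps)
  also have "\<dots> \<le> lyapunov z n - \<epsilon> * t\<^sup>2"
    using step_size_Suc[of n] unfolding c_def k_def g_def by (simp add: mult_right_mono)
  finally show ?thesis
    unfolding k_def t_def .
qed

lemma lyapunov_lower_bound: "\<epsilon> * (normS S (x (Suc n) - z))\<^sup>2 \<le> lyapunov z n"
proof -
  define r where "r = normS S (x (Suc n) - z)"
  define t where "t = residual n"
  have "- inner (u (Suc n)) (x (Suc n) - z) \<le> L n * (t * r)"
    using inner_u_Suc_le[of n "x (Suc n) - z"] unfolding r_def t_def by simp
  moreover have "L n * (2 * t * r) \<le> L n * (t\<^sup>2 + r\<^sup>2)"
    using sum_squares_bound[of t r] L_nonneg[of n] by (rule mult_left_mono)
  moreover have "\<epsilon> * r\<^sup>2 \<le> (1 - L n) * r\<^sup>2"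
    using L_le_1_minus_eps[of n] by (simp add: mult_right_mono)
  ultimately show ?thesis
    unfolding lyapunov_def r_def[symmetric] t_def[symmetric] by (simp add: algebra_simps)
qed

lemma lyapunov_nonneg: "0 \<le> lyapunov z n"
  using lyapunov_lower_bound[of n z] mult_nonneg_nonneg[OF less_imp_le[OF eps_pos] zero_le_power2]
  by (rule order_trans[rotated])

lemma lyapunov_decseq:
  assumes "z \<in> zer3 A B C"
  shows "decseq (lyapunov z)"
proof (rule decseq_SucI)
  show "lyapunov z (Suc n) \<le> lyapunov z n" for n
    using lyapunov_decrease[OF assms, of n]
      mult_nonneg_nonneg[OF less_imp_le[OF eps_pos] zero_le_power2[of "residual (Suc n)"]]
    by linarith
qed

lemma residual_tendsto_zero: "residual \<longlonglongrightarrow> 0"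
proof -
  obtain z where z: "z \<in> zer3 A B C"
    using zer_nonempty by blast
  have "summable (\<lambda>n. \<epsilon> * (residual (Suc n))\<^sup>2)"
  proof (rule nonneg_descent_summable[of "lyapunov z"])
    show "lyapunov z (Suc n) + \<epsilon> * (residual (Suc n))\<^sup>2 \<le> lyapunov z n" for n
      using lyapunov_decrease[OF z, of n] by simp
  qed (use lyapunov_nonneg eps_pos in auto)
  then have "(\<lambda>n. \<epsilon> * (residual (Suc n))\<^sup>2) \<longlonglongrightarrow> 0"
    by (rule summable_LIMSEQ_zero)
  then have "(\<lambda>n. sqrt ((1 / \<epsilon>) * (\<epsilon> * (residual (Suc n))\<^sup>2))) \<longlonglongrightarrow> sqrt ((1 / \<epsilon>) * 0)"
    by (intro tendsto_intros)
  then have "(\<lambda>n. residual (Suc n)) \<longlonglongrightarrow> 0"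
    using eps_pos residual_nonneg by simp
  then show ?thesis
    by (rule LIMSEQ_imp_Suc)
qed

lemma lyapunov_convergent:
  assumes "z \<in> zer3 A B C"
  shows "convergent (lyapunov z)"
  using decseq_convergent[OF lyapunov_decseq[OF assms], of 0] lyapunov_nonneg
  by (metis convergent_def)

lemma dist_zer3_bounded:
  assumes "z \<in> zer3 A B C"
  shows "normS S (x (Suc n) - z) \<le> sqrt (lyapunov z 0 / \<epsilon>)"
proof -
  have "\<epsilon> * (normS S (x (Suc n) - z))\<^sup>2 \<le> lyapunov z 0"
    using lyapunov_lower_bound[of n z] lyapunov_decseq[OF assms] by (metis decseqD le0 order_trans)
  then have "(normS S (x (Suc n) - z))\<^sup>2 \<le> lyapunov z 0 / \<epsilon>"
    using eps_pos by (simp add: field_simps)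
  then show ?thesis
    by (simp add: real_le_rsqrt)
qed

lemma inner_u_dist_tendsto_zero:
  assumes "z \<in> zer3 A B C"
  shows "(\<lambda>n. inner (u (Suc n)) (x (Suc n) - z)) \<longlonglongrightarrow> 0"
proof (rule Lim_null_comparison)
  define R where "R = sqrt (lyapunov z 0 / \<epsilon>)"
  show "(\<lambda>n. residual n * R) \<longlonglongrightarrow> 0"
    using residual_tendsto_zero by (simp add: tendsto_mult_left_zero)
  have "\<bar>inner (u (Suc n)) (x (Suc n) - z)\<bar> \<le> residual n * R" for n
  proof -
    have "\<bar>inner (u (Suc n)) (x (Suc n) - z)\<bar> \<le> L n * residual n * normS S (x (Suc n) - z)"
      by (rule inner_u_Suc_le)
    also have "\<dots> \<le> 1 * residual n * R"
      using dist_zer3_bounded[OF assms, of n] L_nonneg[of n] L_less_1[of n] residual_nonneg[of n]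
        normS_nonneg[of "x (Suc n) - z"] unfolding R_def
      by (intro mult_mono) auto
    finally show ?thesis
      by simp
  qed
  then show "\<forall>\<^sub>F n in sequentially. norm (inner (u (Suc n)) (x (Suc n) - z)) \<le> residual n * R"
    by simp
qed

lemma damped_residual_tendsto_zero: "(\<lambda>n. L n * (residual n)\<^sup>2) \<longlonglongrightarrow> 0"
proof (rule Lim_null_comparison)
  show "(\<lambda>n. (residual n)\<^sup>2) \<longlonglongrightarrow> 0"
    using tendsto_power[OF residual_tendsto_zero, of 2] by simp
  have "norm (L n * (residual n)\<^sup>2) \<le> (residual n)\<^sup>2" for n
    using mult_left_le_one_le[of "(residual n)\<^sup>2" "L n"] L_nonneg[of n] L_less_1[of n] by simp
  then show "\<forall>\<^sub>F n in sequentially. norm (L n * (residual n)\<^sup>2) \<le> (residual n)\<^sup>2"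
    by simp
qed

lemma dist_zer3_convergent:
  assumes "z \<in> zer3 A B C"
  shows "convergent (\<lambda>n. normS S (x n - z))"
proof -
  obtain l where "lyapunov z \<longlonglongrightarrow> l"
    using lyapunov_convergent[OF assms] by (auto simp: convergent_def)
  then have "(\<lambda>n. lyapunov z n - 2 * inner (u (Suc n)) (x (Suc n) - z) - L n * (residual n)\<^sup>2)
      \<longlonglongrightarrow> l - 2 * 0 - 0"
    by (intro tendsto_intros inner_u_dist_tendsto_zero[OF assms] damped_residual_tendsto_zero)
  then have "(\<lambda>n. (normS S (x (Suc n) - z))\<^sup>2) \<longlonglongrightarrow> l"
    unfolding lyapunov_def by simp
  then have "(\<lambda>n. sqrt ((normS S (x (Suc n) - z))\<^sup>2)) \<longlonglongrightarrow> sqrt l"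
    by (rule tendsto_real_sqrt)
  then have "convergent (\<lambda>n. normS S (x (Suc n) - z))"
    using normS_nonneg by (auto simp: convergent_def)
  then show ?thesis
    using convergent_Suc_iff[of "\<lambda>n. normS S (x n - z)"] by simp
qed

lemma x_minus_y_tendsto_zero: "(\<lambda>n. x n - y n) \<longlonglongrightarrow> 0"
proof -
  obtain c where "c > 0" and c: "\<And>v. norm v \<le> c * normS S v"
    using norm_le_normS by blast
  have "(\<lambda>n. norm (x n - y n)) \<longlonglongrightarrow> 0"
  proof (rule Lim_null_comparison)
    show "(\<lambda>n. c * residual n) \<longlonglongrightarrow> 0"
      using residual_tendsto_zero by (simp add: tendsto_mult_right_zero)
    show "\<forall>\<^sub>F n in sequentially. norm (norm (x n - y n)) \<le> c * residual n"
      unfolding residual_def using c by simp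
  qed
  then show ?thesis
    by (simp add: tendsto_norm_zero_iff)
qed

lemma u_tendsto_zero: "u \<longlonglongrightarrow> 0"
proof -
  obtain c where "c > 0" and c: "\<And>v. norm v \<le> c * normS (inv S) v"
    using strongly_positive.norm_le_normS[OF strongly_positive_inv] by blast
  have "(\<lambda>n. norm (u (Suc n))) \<longlonglongrightarrow> 0"
  proof (rule Lim_null_comparison)
    show "(\<lambda>n. c * residual n) \<longlonglongrightarrow> 0"
      using residual_tendsto_zero by (simp add: tendsto_mult_right_zero)
    have "norm (u (Suc n)) \<le> c * residual n" for n
    proof -
      have "normS (inv S) (u (Suc n)) \<le> residual n"
        using u_Suc_bound[of n]
          mult_left_le_one_le[OF residual_nonneg[of n] L_nonneg[of n] less_imp_le[OF L_less_1[of n]]]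
        by linarith
      then show ?thesis
        using c[of "u (Suc n)"] \<open>c > 0\<close> by (simp add: order_trans[OF _ mult_left_mono])
    qed
    then show "\<forall>\<^sub>F n in sequentially. norm (norm (u (Suc n))) \<le> c * residual n"
      by simp
  qed
  then show ?thesis
    by (simp add: tendsto_norm_zero_iff LIMSEQ_imp_Suc)
qed

lemma lipschitz_on_B: "\<exists>K. K-lipschitz_on UNIV B"
  using lipschitz_wrt_imp_lipschitz_on[OF B_lipschitz mu_nonneg] .

lemma lipschitz_on_C: "\<exists>K. K-lipschitz_on UNIV C"
  using lipschitz_wrt_imp_lipschitz_on[OF cocoercive_imp_lipschitz_wrt[OF C_cocoercive beta_pos]]
    beta_pos by simp

lemma lipschitz_tendsto_diff_zero:
  fixes T :: "'a \<Rightarrow> 'a"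
  assumes "K-lipschitz_on UNIV T"
  shows "(\<lambda>n. T (x n) - T (y n)) \<longlonglongrightarrow> 0"
proof -
  have "(\<lambda>n. norm (T (x n) - T (y n))) \<longlonglongrightarrow> 0"
  proof (rule Lim_null_comparison)
    show "(\<lambda>n. K * norm (x n - y n)) \<longlonglongrightarrow> 0"
      using tendsto_norm_zero[OF x_minus_y_tendsto_zero] by (simp add: tendsto_mult_right_zero)
    show "\<forall>\<^sub>F n in sequentially. norm (norm (T (x n) - T (y n))) \<le> K * norm (x n - y n)"
      using lipschitz_onD[OF assms] by (simp add: dist_norm)
  qed
  then show ?thesis
    by (simp add: tendsto_norm_zero_iff)
qed

lemma inclusion_residual_tendsto_zero: "(\<lambda>n. alpha n + (B (y n) + C (y n))) \<longlonglongrightarrow> 0"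
proof -
  define w where "w n = S (x n - y n) - u (Suc n) + u n" for n
  have alpha_eq: "alpha n + (B (y n) + C (y n))
      = (1 / gam n) *\<^sub>R w n - (B (x n) - B (y n)) - (C (x n) - C (y n))" for n
  proof -
    have "alpha n = (1 / gam n) *\<^sub>R (gam n *\<^sub>R alpha n)"
      using gam_pos[of n] by simp
    then show ?thesis
      unfolding gam_alpha_eq w_def using gam_pos[of n] by (simp add: algebra_simps)
  qed
  have "w \<longlonglongrightarrow> S 0 - 0 + 0"
    unfolding w_def
    by (intro tendsto_add tendsto_diff tendsto x_minus_y_tendsto_zero u_tendsto_zero
        LIMSEQ_Suc[OF u_tendsto_zero])
  then have "(\<lambda>n. norm (w n)) \<longlonglongrightarrow> 0"
    by (simp add: zero tendsto_norm_zero)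
  then have "(\<lambda>n. (1 / gam n) *\<^sub>R w n) \<longlonglongrightarrow> 0"
  proof (rule Lim_null_comparison[OF _ tendsto_mult_right_zero, rotated])
    have "norm ((1 / gam n) *\<^sub>R w n) \<le> 1 / \<gamma> * norm (w n)" for n
    proof -
      have "norm ((1 / gam n) *\<^sub>R w n) = 1 / gam n * norm (w n)"
        using gam_pos[of n] by simp
      also have "\<dots> \<le> 1 / \<gamma> * norm (w n)"
        using gam_ge[of n] gamma_pos by (intro mult_right_mono) (simp_all add: frac_le)
      finally show ?thesis .
    qed
    then show "\<forall>\<^sub>F n in sequentially. norm ((1 / gam n) *\<^sub>R w n) \<le> 1 / \<gamma> * norm (w n)"
      by simp
  qed
  moreover obtain KB KC where "KB-lipschitz_on UNIV B" "KC-lipschitz_on UNIV C"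
    using lipschitz_on_B lipschitz_on_C by blast
  ultimately have "(\<lambda>n. (1 / gam n) *\<^sub>R w n - (B (x n) - B (y n)) - (C (x n) - C (y n)))
      \<longlonglongrightarrow> 0 - 0 - 0"
    by (intro tendsto_diff lipschitz_tendsto_diff_zero)
  then show ?thesis
    unfolding alpha_eq by simp
qed

lemma Bseq_y: "Bseq y"
proof -
  obtain z where "z \<in> zer3 A B C"
    using zer_nonempty by blast
  then have "Bseq x"
    by (rule Bseq_if_normS_dist_convergent[OF dist_zer3_convergent])
  then obtain K1 where K1: "\<And>n. norm (x n) \<le> K1"
    using BseqD by blast
  obtain K2 where K2: "\<And>n. norm (x n - y n) \<le> K2"
    using BseqD[OF convergent_imp_Bseq[OF convergentI[OF x_minus_y_tendsto_zero]]] by blast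
  have "norm (y n) \<le> K1 + K2" for n
  proof -
    have "norm (y n) = norm (x n - (x n - y n))"
      by simp
    also have "\<dots> \<le> norm (x n) + norm (x n - y n)"
      by (rule norm_triangle_ineq4)
    finally show ?thesis
      using K1[of n] K2[of n] by linarith
  qed
  then show ?thesis
    by (rule BseqI')
qed

lemma weak_cluster_point_mem_zer3:
  assumes "strict_mono \<sigma>" and "weakly_converges (x \<circ> \<sigma>) w"
  shows "w \<in> zer3 A B C"
proof -
  obtain KB KC where "KB-lipschitz_on UNIV B" "KC-lipschitz_on UNIV C"
    using lipschitz_on_B lipschitz_on_C by blast
  then have lip: "(KB + KC)-lipschitz_on UNIV (\<lambda>v. B v + C v)"
    by (rule lipschitz_on_add)
  have mono: "monotone_fun (\<lambda>v. B v + C v)"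
    unfolding monotone_fun_def
  proof (intro allI)
    fix a b
    have "0 \<le> inner (B a - B b) (a - b)" "0 \<le> inner (C a - C b) (a - b)"
      using B_monotone cocoercive_imp_monotone[OF C_cocoercive beta_pos]
      unfolding monotone_fun_def by blast+
    moreover have "inner ((B a + C a) - (B b + C b)) (a - b)
        = inner (B a - B b) (a - b) + inner (C a - C b) (a - b)"
      by (simp add: inner_diff_left inner_add_left)
    ultimately show "0 \<le> inner ((B a + C a) - (B b + C b)) (a - b)"
      by linarith
  qed
  have "- (B w + C w) \<in> A w"
  proof (rule maximal_monotone_add_weak_strong_closed[OF A_maximal lip mono])
    show "(alpha \<circ> \<sigma>) n \<in> A ((y \<circ> \<sigma>) n)" for n
      using alpha_mem by simp
    show "(\<lambda>n. (alpha \<circ> \<sigma>) n + (B ((y \<circ> \<sigma>) n) + C ((y \<circ> \<sigma>) n))) \<longlonglongrightarrow> 0"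
      using LIMSEQ_subseq_LIMSEQ[OF inclusion_residual_tendsto_zero assms(1)] by (simp add: o_def)
    have "(\<lambda>n. (x \<circ> \<sigma>) n - (y \<circ> \<sigma>) n) \<longlonglongrightarrow> 0"
      using LIMSEQ_subseq_LIMSEQ[OF x_minus_y_tendsto_zero assms(1)] by (simp add: o_def)
    then show "weakly_converges (y \<circ> \<sigma>) w"
      using assms(2) by (rule weakly_converges_tendsto_diff[rotated])
    show "Bseq (y \<circ> \<sigma>)"
      using Bseq_subseq[OF Bseq_y] by (simp add: o_def)
  qed
  then show ?thesis
    unfolding mem_zer3_iff by (simp add: algebra_simps)
qed

end

theorem theorem3p1:
  fixes S :: "'a::{real_inner,complete_space} \<Rightarrow> 'a"
    and A :: "'a \<Rightarrow> 'a set" and B C :: "'a \<Rightarrow> 'a"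
    and \<mu> \<beta> \<gamma> \<epsilon> :: real
    and gam L :: "nat \<Rightarrow> real" and M :: "nat \<Rightarrow> 'a \<Rightarrow> 'a"
    and x0 u0 :: 'a and x y u :: "nat \<Rightarrow> 'a"
  assumes S: "strongly_pos_sa S"
    and A: "maximal_monotone A"
    and B_mono: "monotone_fun B" and mu: "\<mu> \<ge> 0" and B_lip: "lipschitz_wrt S \<mu> B"
    and beta: "\<beta> > 0" and C: "cocoercive_wrt S \<beta> C"
    and zer_ne: "zer3 A B C \<noteq> {}"
    and gamma: "\<gamma> > 0" and gam: "\<And>k. gam k \<ge> \<gamma>"
    and Lk: "\<And>k. 0 \<le> L k \<and> L k < 1"
    and M: "\<And>k. lipschitz_wrt S (L k) (\<lambda>z. gam k *\<^sub>R M k z - S z)"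
    and eps: "\<epsilon> > 0"
    and step: "\<And>k. k \<ge> 1 \<Longrightarrow>
        1 - L (k - 1) - L k - 2 * gam k * L k * \<mu> - (gam k)\<^sup>2 * \<mu>\<^sup>2 - gam k * \<beta> / 2 \<ge> \<epsilon>"
    and init: "x 0 = x0" "u 0 = u0"
    and y_def: "\<And>k. M k (x k) - (B (x k) + C (x k)) + (1 / gam k) *\<^sub>R u k
                     \<in> (\<lambda>a. M k (y k) + a) ` A (y k)"
    and x_def: "\<And>k. x (Suc k) = y k - gam k *\<^sub>R inv S (B (y k)) + gam k *\<^sub>R inv S (B (x k))"
    and u_def: "\<And>k. u (Suc k) = (gam k *\<^sub>R M k (y k) - S (y k)) - (gam k *\<^sub>R M k (x k) - S (x k))"
  shows "\<exists>z \<in> zer3 A B C. weakly_converges x z"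
proof -
  interpret nfbhf_iteration S A B C \<mu> \<beta> \<gamma> \<epsilon> gam L M x y u
    by unfold_locales (use assms in auto)
  show ?thesis
  proof (rule opial[OF zer_ne])
    show "\<And>z. z \<in> zer3 A B C \<Longrightarrow> convergent (\<lambda>n. normS S (x n - z))"
      by (rule dist_zer3_convergent)
    show "\<And>\<sigma> w. strict_mono \<sigma> \<Longrightarrow> weakly_converges (x \<circ> \<sigma>) w \<Longrightarrow> w \<in> zer3 A B C"
      by (rule weak_cluster_point_mem_zer3)
  qed
qed

end
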